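(* The quadratic form $$\sum_{\sigma\in S_0}\sigma\left(x_{1,\sigma}^2+x_{2,\sigma}^2+x_{3,\sigma}^2+x_{4,\sigma}^2+\epsilon x_{5,\sigma}^2+\epsilon x_{6,\sigma}^2+\epsilon x_{7,\sigma}^2+\epsilon x_{8,\sigma}^2\right)$$ is universal over $\mathcal{O}_K$ (it represents every totally positive element of $\mathcal{O}_K$ with variables in $\mathcal{O}_K$) and has $8M_D$ variables.
   Context: $D>1$ squarefree, $K=\mathbb{Q}(\sqrt D)$, $\mathcal{O}_K$ its ring of integers, $\alpha'$ the conjugate; totally positive means $\alpha>0,\alpha'>0$. $\omega_D=\sqrt D$ if $D\equiv2,3\pmod4$, $\omega_D=\frac{1+\sqrt D}2$ if $D\equiv1\pmod4$, with continued fraction $\omega_D=[u_0;\overline{u_1,\dots,u_s}]$, $s$ minimal period. Let $p_{-1}=1,q_{-1}=0,p_0=u_0,q_0=1$, $p_{i+1}=u_{i+1}p_i+p_{i-1}$, $q_{i+1}=u_{i+1}q_i+q_{i-1}$, $\alpha_i=p_i-q_i\omega_D'$, $\alpha_{i,r}=\alpha_i+r\alpha_{i+1}$. $S=\{\alpha_{i,r},\alpha_{i,r}'\mid i\geq-1\text{ odd},0\leq r<u_{i+2}\}$, $\epsilon$ the totally positive fundamental unit of $\mathcal{O}_K$, $S_0=\{\sigma\in S\mid\epsilon>\sigma\geq\sigma'>0\}$. $M_D=u_1+u_3+\dots+u_{s-1}$ if $s$ is even; $M_D=2u_0+u_1+\dots+u_{s-1}$ if $s$ odd and $D\equiv2,3\pmod4$;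 $M_D=2u_0+u_1+\dots+u_{s-1}-1$ if $s$ odd and $D\equiv1\pmod4$. *)

theory Defs
  imports Complex_Main "HOL-Computational_Algebra.Squarefree"
begin

definition omegaD :: "nat \<Rightarrow> real" where
  "omegaD D = (if D mod 4 = 1 then (1 + sqrt (real D)) / 2 else sqrt (real D))"

definition omegaD' :: "nat \<Rightarrow> real" where
  "omegaD' D = (if D mod 4 = 1 then (1 - sqrt (real D)) / 2 else - sqrt (real D))"

definition OK :: "nat \<Rightarrow> real set" where
  "OK D = {x. \<exists>a b :: int. x = of_int a + of_int b * omegaD D}"

definition qconj :: "nat \<Rightarrow> real \<Rightarrow> real" where
  "qconj D x = (THE y. \<exists>a b :: rat. x = of_rat a + of_rat b * sqrt (real D)
                                  \<and> y = of_rat a - of_rat b * sqrt (real D))"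

definition totally_positive :: "nat \<Rightarrow> real \<Rightarrow> bool" where
  "totally_positive D x \<longleftrightarrow> x > 0 \<and> qconj D x > 0"

definition tp_units_gt1 :: "nat \<Rightarrow> real set" where
  "tp_units_gt1 D = {u \<in> OK D. (\<exists>v \<in> OK D. u * v = 1) \<and> totally_positive D u \<and> u > 1}"

definition epsD :: "nat \<Rightarrow> real" where
  "epsD D = (THE u. u \<in> tp_units_gt1 D \<and> (\<forall>v \<in> tp_units_gt1 D. u \<le> v))"

fun cfrem :: "real \<Rightarrow> nat \<Rightarrow> real" where
  "cfrem x 0 = x"
| "cfrem x (Suc n) = 1 / frac (cfrem x n)"

definition u :: "nat \<Rightarrow> nat \<Rightarrow> int" where
  "u D n = \<lfloor>cfrem (omegaD D) n\<rfloor>"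

definition period :: "nat \<Rightarrow> nat" where
  "period D = (LEAST s. s > 0 \<and> (\<forall>i\<ge>1. u D (i + s) = u D i))"

text \<open>Convergents, shifted by one: pq a j = (p_{j-1}, q_{j-1}), so pq a 0 = (p_{-1}, q_{-1}) = (1,0).\<close>
fun pq :: "(nat \<Rightarrow> int) \<Rightarrow> nat \<Rightarrow> int \<times> int" where
  "pq a 0 = (1, 0)"
| "pq a (Suc 0) = (a 0, 1)"
| "pq a (Suc (Suc n)) =
     (a (Suc n) * fst (pq a (Suc n)) + fst (pq a n),
      a (Suc n) * snd (pq a (Suc n)) + snd (pq a n))"

text \<open>alphaS D j = alpha_{j-1} = p_{j-1} - q_{j-1} omega_D'.\<close>
definition alphaS :: "nat \<Rightarrow> nat \<Rightarrow> real" where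
  "alphaS D j = of_int (fst (pq (u D) j)) - of_int (snd (pq (u D) j)) * omegaD' D"

text \<open>For odd i = 2k-1 (k \<ge> 0): alpha_{i,r} = alpha_i + r alpha_{i+1}, with 0 \<le> r < u_{i+2}.\<close>
definition alpha_ir :: "nat \<Rightarrow> nat \<Rightarrow> nat \<Rightarrow> real" where
  "alpha_ir D k r = alphaS D (2*k) + real r * alphaS D (2*k + 1)"

definition Sset :: "nat \<Rightarrow> real set" where
  "Sset D = {a. \<exists>k r. int r < u D (2*k + 1) \<and>
                      (a = alpha_ir D k r \<or> a = qconj D (alpha_ir D k r))}"

definition S0 :: "nat \<Rightarrow> real set" where
  "S0 D = {\<sigma> \<in> Sset D. epsD D > \<sigma> \<and> \<sigma> \<ge> qconj D \<sigma> \<and> qconj D \<sigma> > 0}"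

definition MD :: "nat \<Rightarrow> int" where
  "MD D = (let s = period D in
     if even s then (\<Sum>k<s div 2. u D (2*k + 1))
     else if D mod 4 = 1 then 2 * u D 0 + (\<Sum>i\<in>{1..<s}. u D i) - 1
     else 2 * u D 0 + (\<Sum>i\<in>{1..<s}. u D i))"

definition Qform :: "nat \<Rightarrow> (real \<Rightarrow> nat \<Rightarrow> real) \<Rightarrow> real" where
  "Qform D x = (\<Sum>\<sigma>\<in>S0 D. \<sigma> * ((\<Sum>j\<in>{1..4}. (x \<sigma> j)^2)
                                + epsD D * (\<Sum>j\<in>{5..8}. (x \<sigma> j)^2)))"

end

theory Submission
  imports Defs
begin

text \<open>
  Let \<open>\<epsilon>\<close> be the fundamental totally positive unit. Ordering the totally positive integers
  by the ratio \<open>\<alpha>'/\<alpha>\<close>, every one of them lies in the cone spanned by two consecutive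
  indecomposables \<open>b\<close> and \<open>c\<close>; these form a \<open>\<int>\<close>-basis of \<open>O\<^sub>K\<close>, so \<open>\<alpha> = m b + n c\<close>
  with \<open>m, n \<in> \<nat>\<close>. Every indecomposable is \<open>\<sigma> \<epsilon>\<^sup>k\<close> with \<open>\<sigma> \<in> S\<^sub>0\<close>, and \<open>\<epsilon>\<^sup>k\<close> is a square
  or \<open>\<epsilon>\<close> times a square; by Lagrange's four-square theorem \<open>m \<sigma> \<epsilon>\<^sup>k\<close> is then a value of
  one of the blocks \<open>\<sigma>(x\<^sub>1\<^sup>2 + \<dots> + x\<^sub>4\<^sup>2)\<close> and \<open>\<sigma>\<epsilon>(x\<^sub>5\<^sup>2 + \<dots> + x\<^sub>8\<^sup>2)\<close>. Consecutive
  indecomposables never need the same block, since otherwise another indecomposable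
  \<open>\<sigma> \<epsilon>\<^sup>k\<^sup>+\<^sup>1\<close> would lie strictly between them.

  The indecomposables \<open>\<sigma> \<ge> \<sigma>'\<close> are the semiconvergents \<open>\<alpha>\<^sub>i\<^sub>,\<^sub>r\<close> (\<open>i\<close> odd) of \<open>\<omega>\<^sub>D\<close>, and
  \<open>\<epsilon> = \<alpha>\<^sub>E\<^sub>-\<^sub>1\<close> where \<open>E\<close> is \<open>s\<close> or \<open>2s\<close> according to the parity of the period \<open>s\<close>. Hence
  \<open>S\<^sub>0\<close> is in bijection with the pairs \<open>(k, t)\<close> with \<open>2k < E\<close> and \<open>t < u\<^sub>2\<^sub>k\<^sub>+\<^sub>1\<close>, which
  are counted by \<open>M\<^sub>D\<close>.
\<close>


lemma sqrt_squarefree_irrational: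
  assumes "D > 1" "squarefree D"
  shows "sqrt (real D) \<notin> \<rat>"
proof
  assume "sqrt (real D) \<in> \<rat>"
  then obtain m n :: nat where n: "n \<noteq> 0" and eq: "\<bar>sqrt (real D)\<bar> = real m / real n" and cop: "coprime m n"
    by (rule Rats_abs_nat_div_natE)
  have "sqrt (real D) = real m / real n" using eq by simp
  then have "real n * sqrt (real D) = real m"
    using n by (simp add: field_simps)
  then have "(real m)^2 = (real n)^2 * (sqrt (real D))^2" by (metis power_mult_distrib)
  then have "real D * (real n)^2 = (real m)^2" by simp
  then have eqn: "D * n^2 = m^2" by (metis of_nat_eq_iff of_nat_mult of_nat_power)
  then have "n^2 dvd m^2" by (metis dvd_triv_right)
  moreover have "coprime (n^2) (m^2)" using cop by (simp add: coprime_commute)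
  ultimately have "is_unit (n^2)" by (metis coprime_absorb_left coprime_commute dvd_refl coprime_dvd_mult_left_iff)
  then have "n = 1" by simp
  then have "D = m^2" using eqn by simp
  then have "squarefree (m^2)" using assms by simp
  then have "is_unit m" using squarefree_power_iff[of m 2] by simp
  then have "m = 1" by simp
  then show False using \<open>D = m^2\<close> assms by simp
qed

lemma power_int_parity_square:
  fixes e :: "'a :: field"
  assumes "e \<noteq> 0"
  shows "e powi k = (if odd k then e else 1) * (e powi (k div 2))^2"
proof -
  have "e powi k = e powi (2 * (k div 2)) * e powi (k mod 2)"
    using assms by (metis div_mult_mod_eq mult.commute power_int_add)
  also have "e powi (2 * (k div 2)) = (e powi (k div 2))^2"
    by (simp add: power_int_mult mult.commute[of 2])
  also have "e powi (k mod 2) = (if odd k then e else 1)"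
    by (cases "odd k") (simp_all add: odd_iff_mod_2_eq_one even_iff_mod_2_eq_zero)
  finally show ?thesis by simp
qed

lemma ex_power_int_bracket:
  fixes e x :: real
  assumes "e > 1" "x > 0"
  shows "\<exists>n. e powi n \<le> x \<and> x < e powi (n + 1)"
proof -
  define n where "n = \<lfloor>log e x\<rfloor>"
  have pw: "e powr real_of_int k = e powi k" for k using assms by (simp add: powr_real_of_int')
  have "e powr of_int n \<le> e powr log e x" using assms by (intro powr_mono) (auto simp: n_def)
  moreover have "e powr log e x < e powr of_int (n + 1)"
    using assms by (intro powr_less_mono) (auto simp: n_def)
  ultimately show ?thesis using pw[of n] pw[of "n + 1"] assms by auto
qed

section \<open>Lagrange's four-square theorem\<close>

definition sum4sq :: "int \<Rightarrow> bool" where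
  "sum4sq n \<longleftrightarrow> (\<exists>a b c d. n = a^2 + b^2 + c^2 + d^2)"

lemma euler_four_squares:
  fixes a b c d A B C D :: int
  shows "(a^2 + b^2 + c^2 + d^2) * (A^2 + B^2 + C^2 + D^2) =
    (a*A + b*B + c*C + d*D)^2 + (a*B - b*A + c*D - d*C)^2 + (a*C - b*D - c*A + d*B)^2 + (a*D + b*C - c*B - d*A)^2"
  by (simp add: power2_eq_square algebra_simps)

lemma sum4sq_mult: "sum4sq m \<Longrightarrow> sum4sq n \<Longrightarrow> sum4sq (m * n)"
  unfolding sum4sq_def using euler_four_squares by metis

lemma sum4sq_half_aux:
  fixes x y z v :: int
  assumes "even (x + y)" "even (z + v)" "2 * k = x^2 + y^2 + z^2 + v^2"
  shows "sum4sq k"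
proof -
  obtain i where i: "x + y = 2 * i" using assms(1) by (rule evenE)
  obtain j where j: "z + v = 2 * j" using assms(2) by (rule evenE)
  have x: "x = 2 * i - y" using i by simp
  have z: "z = 2 * j - v" using j by simp
  have "2 * k = 2 * (i^2 + (i - y)^2 + j^2 + (j - v)^2)"
    using assms(3) unfolding x z by (simp add: power2_eq_square algebra_simps)
  then have "k = i^2 + (i - y)^2 + j^2 + (j - v)^2" by simp
  then show ?thesis unfolding sum4sq_def by blast
qed

lemma sum4sq_half: "sum4sq (2 * k) \<Longrightarrow> sum4sq k"
proof -
  assume "sum4sq (2 * k)"
  then obtain a b c d where e: "2 * k = a^2 + b^2 + c^2 + d^2" unfolding sum4sq_def by blast
  have "even (a^2 + b^2 + c^2 + d^2)" using e by (metis dvd_triv_left)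
  then have ev: "even (a + b + c + d)" by simp
  show ?thesis
  proof (cases "even (a + b)")
    case True
    then have "even (c + d)" using ev by (metis add.assoc even_add)
    then show ?thesis using sum4sq_half_aux[OF True _ e] by simp
  next
    case False
    show ?thesis
    proof (cases "even (a + c)")
      case True
      then have "even (b + d)" using ev by (metis add.assoc add.commute even_add)
      moreover have "2 * k = a^2 + c^2 + b^2 + d^2" using e by simp
      ultimately show ?thesis using sum4sq_half_aux[OF True] by blast
    next
      case False2: False
      have "even (a + d)" using ev False False2 by simp
      moreover have "even (b + c)" using False False2 by simp
      moreover have "2 * k = a^2 + d^2 + b^2 + c^2" using e by simp
      ultimately show ?thesis using sum4sq_half_aux by blast
    qed
  qed
qed

lemma eq_if_prime_dvd_diff_squares:
  fixes p x x' :: int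
  assumes p: "prime p" and x: "0 \<le> x" "2 * x < p" and x': "0 \<le> x'" "2 * x' < p"
    and dvd: "p dvd x^2 - x'^2"
  shows "x = x'"
proof -
  have "x^2 - x'^2 = (x - x') * (x + x')" by (simp add: power2_eq_square algebra_simps)
  then have "p dvd (x - x') \<or> p dvd (x + x')" using dvd p prime_dvd_mult_iff by metis
  then show ?thesis
  proof
    assume "p dvd (x - x')"
    then have "x - x' = 0 \<or> \<bar>p\<bar> \<le> \<bar>x - x'\<bar>" using dvd_imp_le_int by blast
    then show ?thesis using x x' by linarith
  next
    assume "p dvd (x + x')"
    then have "x + x' = 0 \<or> \<bar>p\<bar> \<le> \<bar>x + x'\<bar>" using dvd_imp_le_int by blast
    then show ?thesis using x x' by linarith
  qed
qed

text \<open>Pigeonhole: the \<open>(p + 1)/2\<close> values \<open>x\<^sup>2\<close> and the \<open>(p + 1)/2\<close> values \<open>-1 - y\<^sup>2\<close> are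
  pairwise distinct modulo \<open>p\<close> within each family, so the two families meet.\<close>
lemma prime_dvd_two_squares_plus_one:
  fixes p :: int
  assumes p: "prime p" "odd p"
  shows "\<exists>x y. p dvd x^2 + y^2 + 1 \<and> 0 \<le> x \<and> x \<le> (p - 1) div 2 \<and> 0 \<le> y \<and> y \<le> (p - 1) div 2"
proof -
  define h where "h = (p - 1) div 2"
  have p2: "p \<ge> 2" using prime_ge_2_int p by simp
  have ph: "p = 2 * h + 1" using p(2) by (simp add: h_def)
  have h0: "h \<ge> 0" using p2 ph by simp
  define f where "f x = x^2 mod p" for x
  define g where "g y = (-1 - y^2) mod p" for y
  have key: "x = x'" if "x \<in> {0..h}" "x' \<in> {0..h}" "p dvd x^2 - x'^2" for x x'
    using eq_if_prime_dvd_diff_squares[OF p(1)] that ph by simp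
  have injf: "inj_on f {0..h}"
  proof (rule inj_onI)
    fix x x' assume "x \<in> {0..h}" "x' \<in> {0..h}" "f x = f x'"
    then show "x = x'" using key[of x x'] by (simp add: f_def mod_eq_dvd_iff)
  qed
  have injg: "inj_on g {0..h}"
  proof (rule inj_onI)
    fix y y' assume "y \<in> {0..h}" "y' \<in> {0..h}" "g y = g y'"
    then have "p dvd (-1 - y^2) - (-1 - y'^2)" by (simp add: g_def mod_eq_dvd_iff)
    then have "p dvd y'^2 - y^2" by (simp add: algebra_simps)
    then show "y = y'" using key[of y' y] \<open>y \<in> {0..h}\<close> \<open>y' \<in> {0..h}\<close> by simp
  qed
  have sub: "f ` {0..h} \<union> g ` {0..h} \<subseteq> {0..<p}" using p2 by (auto simp: f_def g_def)
  have "\<not> (f ` {0..h} \<inter> g ` {0..h} = {})"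
  proof
    assume disj: "f ` {0..h} \<inter> g ` {0..h} = {}"
    have "card (f ` {0..h} \<union> g ` {0..h}) = card (f ` {0..h}) + card (g ` {0..h})"
      using disj by (simp add: card_Un_disjoint)
    also have "\<dots> = nat (h + 1) + nat (h + 1)" using card_image[OF injf] card_image[OF injg] by simp
    finally have "card (f ` {0..h} \<union> g ` {0..h}) = nat (p + 1)" using ph h0 by simp
    moreover have "card (f ` {0..h} \<union> g ` {0..h}) \<le> card {0..<p}" using card_mono[OF _ sub] by simp
    ultimately show False using p2 by simp
  qed
  then obtain x y where xy: "x \<in> {0..h}" "y \<in> {0..h}" "f x = g y" by blast
  then have "p dvd x^2 - (-1 - y^2)" by (simp add: f_def g_def mod_eq_dvd_iff)
  then have "p dvd x^2 + y^2 + 1" by (simp add: algebra_simps)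
  then show ?thesis using xy by (auto simp: h_def)
qed

lemma prime_multiple_sum4sq:
  fixes p :: int
  assumes p: "prime p" "odd p"
  shows "\<exists>m. 1 \<le> m \<and> m < p \<and> sum4sq (m * p)"
proof -
  have p2: "p \<ge> 2" using prime_ge_2_int p by simp
  define h where "h = (p - 1) div 2"
  have ph: "p = 2 * h + 1" using p(2) by (simp add: h_def)
  obtain x y where xy: "p dvd x^2 + y^2 + 1" "0 \<le> x" "x \<le> h" "0 \<le> y" "y \<le> h"
    using prime_dvd_two_squares_plus_one[OF p] by (auto simp: h_def)
  obtain m where m: "x^2 + y^2 + 1 = m * p" using xy(1) by (metis dvd_def mult.commute)
  have "x^2 \<le> h^2" "y^2 \<le> h^2" using xy by (simp_all add: power_mono)
  then have "m * p \<le> 2 * h^2 + 1" using m by simp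
  also have "\<dots> < p * p" using p2 unfolding ph by (simp add: power2_eq_square algebra_simps) (smt (verit) mult_nonneg_nonneg)
  finally have "m < p" using p2 by simp
  moreover have "m \<ge> 1"
    using m p2 by (smt (verit) mult_nonpos_nonneg zero_le_power2)
  moreover have "sum4sq (m * p)"
    unfolding sum4sq_def using m by (intro exI[of _ x] exI[of _ y] exI[of _ 1] exI[of _ 0]) simp
  ultimately show ?thesis by blast
qed

text \<open>Euler's descent: reduce the four roots of \<open>m p\<close> to the symmetric residue range modulo
  \<open>m\<close>; their squares sum to \<open>m r\<close> with \<open>r < m\<close>, and Euler's identity shows that \<open>m\<^sup>2 r p\<close> is a
  sum of four squares all of whose roots are divisible by \<open>m\<close>.\<close>
lemma sum4sq_descent:
  fixes m p :: int
  assumes p: "prime p" and m: "odd m" "3 \<le> m" "m < p" and mp: "sum4sq (m * p)"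
  shows "\<exists>r. 1 \<le> r \<and> r < m \<and> sum4sq (r * p)"
proof -
  obtain a b c d where abcd: "m * p = a^2 + b^2 + c^2 + d^2" using mp by (auto simp: sum4sq_def)
  define h where "h = (m - 1) div 2"
  have mh: "m = 2 * h + 1" using m(1) by (simp add: h_def)
  define red where "red z = (z + h) mod m - h" for z
  have red_shift: "\<exists>t. red z = z + m * t" for z
  proof -
    have "red z - z = - (m * ((z + h) div m))"
      by (simp add: red_def minus_div_mult_eq_mod[symmetric])
    then show ?thesis by (intro exI[of _ "- ((z + h) div m)"]) (simp add: algebra_simps)
  qed
  have red_sq: "(red z)^2 \<le> h^2" for z
  proof -
    have "0 \<le> (z + h) mod m" "(z + h) mod m < m" using m(2) by auto
    then have "\<bar>red z\<bar> \<le> h" using mh by (simp add: red_def)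
    then show ?thesis by (metis abs_ge_zero power2_abs power_mono)
  qed
  obtain ta tb tc td where
    ta: "red a = a + m * ta" and tb: "red b = b + m * tb" and
    tc: "red c = c + m * tc" and td: "red d = d + m * td"
    using red_shift by metis
  define A B C D where "A = red a" and "B = red b" and "C = red c" and "D = red d"
  define S where "S = A^2 + B^2 + C^2 + D^2"
  have "S = m * (p + 2*a*ta + m*ta^2 + 2*b*tb + m*tb^2 + 2*c*tc + m*tc^2 + 2*d*td + m*td^2)"
    unfolding S_def A_def B_def C_def D_def ta tb tc td
    using abcd by (simp add: power2_eq_square algebra_simps)
  then obtain r where r: "S = m * r" by blast
  have "S \<le> 4 * h^2" using red_sq[of a] red_sq[of b] red_sq[of c] red_sq[of d] by (simp add: S_def A_def B_def C_def D_def)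
  also have "\<dots> < m * m" using mh m(2) by (simp add: power2_eq_square algebra_simps)
  finally have r_less: "r < m" using r m(2) by simp
  have r_nonneg: "r \<ge> 0" using r m(2) by (smt (verit) S_def mult_pos_neg sum_squares_ge_zero zero_le_power2)
  have r_nonzero: "r \<noteq> 0"
  proof
    assume "r = 0"
    then have "A = 0" "B = 0" "C = 0" "D = 0" using r by (auto simp: S_def add_nonneg_eq_0_iff)
    then have "a = m * (-ta)" "b = m * (-tb)" "c = m * (-tc)" "d = m * (-td)"
      using ta tb tc td by (simp_all add: A_def B_def C_def D_def)
    then have "m * p = m * (m * (ta^2 + tb^2 + tc^2 + td^2))"
      using abcd by (simp add: power2_eq_square algebra_simps)
    then have "m dvd p" using m(2) by simp
    moreover have "0 \<le> m" using m(2) by simp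
    ultimately have "m = 1 \<or> m = p" using p unfolding prime_int_iff by blast
    then show False using m by simp
  qed
  define X1 X2 X3 X4 where "X1 = a*A + b*B + c*C + d*D" and "X2 = a*B - b*A + c*D - d*C"
    and "X3 = a*C - b*D - c*A + d*B" and "X4 = a*D + b*C - c*B - d*A"
  have euler: "(m * p) * (m * r) = X1^2 + X2^2 + X3^2 + X4^2"
    unfolding abcd r[symmetric] S_def X1_def X2_def X3_def X4_def by (rule euler_four_squares)
  have "X1 = m * (p + (a*ta + b*tb + c*tc + d*td))"
    unfolding X1_def A_def B_def C_def D_def ta tb tc td
    using abcd by (simp add: power2_eq_square algebra_simps)
  moreover have "X2 = m * (a*tb - b*ta + c*td - d*tc)"
    unfolding X2_def A_def B_def C_def D_def ta tb tc td by (simp add: algebra_simps)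
  moreover have "X3 = m * (a*tc - b*td - c*ta + d*tb)"
    unfolding X3_def A_def B_def C_def D_def ta tb tc td by (simp add: algebra_simps)
  moreover have "X4 = m * (a*td + b*tc - c*tb - d*ta)"
    unfolding X4_def A_def B_def C_def D_def ta tb tc td by (simp add: algebra_simps)
  ultimately obtain Y1 Y2 Y3 Y4 where Y: "X1 = m * Y1" "X2 = m * Y2" "X3 = m * Y3" "X4 = m * Y4"
    by blast
  have "(m * m) * (r * p) = (m * m) * (Y1^2 + Y2^2 + Y3^2 + Y4^2)"
    using euler Y by (simp add: power2_eq_square algebra_simps)
  then have "r * p = Y1^2 + Y2^2 + Y3^2 + Y4^2" using m(2) by simp
  then show ?thesis using r_less r_nonneg r_nonzero unfolding sum4sq_def by (intro exI[of _ r]) auto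
qed

lemma odd_prime_sum4sq:
  fixes p :: int
  assumes p: "prime p" "odd p"
  shows "sum4sq p"
proof -
  define P where "P m \<longleftrightarrow> m \<ge> 1 \<and> sum4sq (int m * p)" for m :: nat
  obtain m1 where m1: "1 \<le> m1" "m1 < p" "sum4sq (m1 * p)" using prime_multiple_sum4sq[OF p] by blast
  then have "P (nat m1)" by (simp add: P_def)
  define m0 where "m0 = (LEAST m. P m)"
  have Pm0: "P m0" unfolding m0_def by (rule LeastI[of P, OF \<open>P (nat m1)\<close>])
  have "m0 \<le> nat m1" unfolding m0_def by (rule Least_le[of P, OF \<open>P (nat m1)\<close>])
  then have m0_less: "int m0 < p" using m1 by linarith
  have least: "\<not> P k" if "k < m0" for k using not_less_Least[of k P] that by (simp add: m0_def)
  have "m0 = 1"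
  proof (rule ccontr)
    assume "m0 \<noteq> 1"
    then have m0_ge: "m0 \<ge> 2" using Pm0 by (simp add: P_def)
    show False
    proof (cases "even m0")
      case True
      then obtain k where k: "m0 = 2 * k" by (auto elim: evenE)
      have "sum4sq (2 * (int k * p))" using Pm0 k by (simp add: P_def algebra_simps)
      then have "sum4sq (int k * p)" by (rule sum4sq_half)
      then show False using least[of k] k m0_ge by (simp add: P_def)
    next
      case False
      then have "3 \<le> int m0" using m0_ge by presburger
      then obtain r where "1 \<le> r" "r < int m0" "sum4sq (r * p)"
        using sum4sq_descent[OF p(1) _ _ m0_less] Pm0 False by (auto simp: P_def)
      then have "P (nat r)" "nat r < m0" by (auto simp: P_def)
      then show False using least by blast
    qed
  qed
  then show ?thesis using Pm0 by (simp add: P_def)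
qed

lemma prime_sum4sq:
  fixes p :: int
  assumes "prime p"
  shows "sum4sq p"
proof (cases "odd p")
  case True then show ?thesis by (rule odd_prime_sum4sq[OF assms])
next
  case False
  then have "2 dvd p" by simp
  have "\<forall>m. 0 \<le> m \<and> m dvd p \<longrightarrow> m = 1 \<or> m = p" using assms by (simp add: prime_int_iff)
  then have "(2::int) = 1 \<or> 2 = p" using \<open>2 dvd p\<close> by (metis zero_le_numeral)
  then have "p = 2" by simp
  then show ?thesis unfolding sum4sq_def by (intro exI[of _ 1] exI[of _ 1] exI[of _ 0] exI[of _ 0]) simp
qed

lemma sum4sq_nat: "sum4sq (int n)"
proof (induction n rule: less_induct)
  case (less n)
  show ?case
  proof (cases "n \<le> 1")
    case True
    have "int n = 0^2 + 0^2 + 0^2 + (int n)^2" using True by (cases n) auto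
    then show ?thesis unfolding sum4sq_def by blast
  next
    case False
    then obtain p where p: "prime p" "p dvd n" using prime_factor_nat[of n] by auto
    then obtain k where k: "n = p * k" using dvdE[OF p(2)] by blast
    have p2: "p \<ge> 2" using prime_ge_2_nat p(1) by simp
    have "k \<noteq> 0" using k False by (cases "k = 0") simp_all
    then have "k < n" using k p2 by simp
    then have "sum4sq (int k)" by (rule less.IH)
    moreover have "sum4sq (int p)" using prime_sum4sq p(1) by simp
    ultimately have "sum4sq (int p * int k)" by (rule sum4sq_mult[rotated])
    then show ?thesis using k by simp
  qed
qed

section \<open>Finite continued fractions\<close>

fun cont_frac :: "(nat \<Rightarrow> int) \<Rightarrow> nat \<Rightarrow> real \<Rightarrow> real" where
  "cont_frac a 0 z = z"
| "cont_frac a (Suc m) z = of_int (a 0) + 1 / cont_frac (\<lambda>n. a (Suc n)) m z"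

lemma cont_frac_gt1: "(\<forall>n. a n \<ge> 1) \<Longrightarrow> z > 1 \<Longrightarrow> cont_frac a m z > 1"
proof (induction m arbitrary: a)
  case 0 then show ?case by simp
next
  case (Suc m)
  have "cont_frac (\<lambda>n. a (Suc n)) m z > 1" using Suc by simp
  moreover have "real_of_int (a 0) \<ge> 1" using Suc by simp
  ultimately have h: "1 / cont_frac (\<lambda>n. a (Suc n)) m z > 0" "real_of_int (a 0) \<ge> 1" by simp_all
  show ?case using h by (simp only: cont_frac.simps; linarith)
qed

lemma cont_frac_contraction:
  "(\<forall>n. a n \<ge> 1) \<Longrightarrow> z1 > 1 \<Longrightarrow> z2 > 1 \<Longrightarrow>
    \<bar>cont_frac a m z1 - cont_frac a m z2\<bar> \<le> \<bar>z1 - z2\<bar> \<and> (m \<ge> 1 \<and> z1 \<noteq> z2 \<longrightarrow> \<bar>cont_frac a m z1 - cont_frac a m z2\<bar> < \<bar>z1 - z2\<bar>)"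
proof (induction m arbitrary: a)
  case 0 then show ?case by simp
next
  case (Suc m)
  define g1 where "g1 = cont_frac (\<lambda>n. a (Suc n)) m z1"
  define g2 where "g2 = cont_frac (\<lambda>n. a (Suc n)) m z2"
  have ag: "\<forall>n. (\<lambda>n. a (Suc n)) n \<ge> 1" using Suc by simp
  have g: "g1 > 1" "g2 > 1" unfolding g1_def g2_def using cont_frac_gt1[OF ag] Suc by auto
  have IH: "\<bar>g1 - g2\<bar> \<le> \<bar>z1 - z2\<bar>" using Suc.IH[OF ag Suc.prems(2,3)] by (simp add: g1_def g2_def)
  have eq: "cont_frac a (Suc m) z1 - cont_frac a (Suc m) z2 = (g2 - g1) / (g1 * g2)"
    using g by (simp add: g1_def g2_def field_simps)
  have gg: "g1 * g2 > 1" using g by (metis less_1_mult)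
  have le: "\<bar>(g2 - g1) / (g1 * g2)\<bar> \<le> \<bar>g1 - g2\<bar>"
    using gg by (simp add: abs_div divide_le_eq abs_minus_commute) (metis abs_ge_zero mult_le_cancel_left1 less_le_not_le)
  have lt: "g1 \<noteq> g2 \<Longrightarrow> \<bar>(g2 - g1) / (g1 * g2)\<bar> < \<bar>g1 - g2\<bar>"
    using gg by (simp add: abs_div divide_less_eq abs_minus_commute)
  show ?case
  proof (intro conjI impI)
    show "\<bar>cont_frac a (Suc m) z1 - cont_frac a (Suc m) z2\<bar> \<le> \<bar>z1 - z2\<bar>" using eq le IH by simp
    assume "Suc m \<ge> 1 \<and> z1 \<noteq> z2"
    show "\<bar>cont_frac a (Suc m) z1 - cont_frac a (Suc m) z2\<bar> < \<bar>z1 - z2\<bar>"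
    proof (cases "g1 = g2")
      case True then show ?thesis using eq \<open>Suc m \<ge> 1 \<and> z1 \<noteq> z2\<close> by simp
    next
      case False then show ?thesis using eq lt IH by simp
    qed
  qed
qed

text \<open>The four variables \<open>x\<^sub>1\<^sub>\<sigma>, \<dots>, x\<^sub>4\<^sub>\<sigma>\<close> (flag \<open>False\<close>) or \<open>x\<^sub>5\<^sub>\<sigma>, \<dots>, x\<^sub>8\<^sub>\<sigma>\<close> (flag \<open>True\<close>, the
  ones weighted by \<open>\<epsilon>\<close>) form a slot; \<open>slot_vector\<close> fills one slot and is zero elsewhere.\<close>
definition slot_vector :: "real \<Rightarrow> bool \<Rightarrow> real \<Rightarrow> real \<Rightarrow> real \<Rightarrow> real \<Rightarrow> real \<Rightarrow> nat \<Rightarrow> real" where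
  "slot_vector s0 f v1 v2 v3 v4 = (\<lambda>s j. if s = s0 then
      (if f then (if j = 5 then v1 else if j = 6 then v2 else if j = 7 then v3 else if j = 8 then v4 else 0)
       else (if j = 1 then v1 else if j = 2 then v2 else if j = 3 then v3 else if j = 4 then v4 else 0))
    else 0)"

lemma slot_vector_mem:
  "0 \<in> A \<Longrightarrow> v1 \<in> A \<Longrightarrow> v2 \<in> A \<Longrightarrow> v3 \<in> A \<Longrightarrow> v4 \<in> A \<Longrightarrow> slot_vector s0 f v1 v2 v3 v4 s j \<in> A"
  by (simp add: slot_vector_def)

lemma slot_vector_disjoint:
  assumes "s1 \<noteq> s2 \<or> f1 \<noteq> f2"
  shows "slot_vector s1 f1 a1 a2 a3 a4 s j * slot_vector s2 f2 b1 b2 b3 b4 s j = 0"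
  using assms by (auto simp: slot_vector_def)

lemma Qform_slot_vector:
  assumes "finite (S0 D)" "s0 \<in> S0 D"
  shows "Qform D (slot_vector s0 f v1 v2 v3 v4) = s0 * (if f then epsD D else 1) * (v1^2 + v2^2 + v3^2 + v4^2)"
proof -
  define g where "g s = s * ((\<Sum>j\<in>{1..4}. (slot_vector s0 f v1 v2 v3 v4 s j)^2)
                                + epsD D * (\<Sum>j\<in>{5..8}. (slot_vector s0 f v1 v2 v3 v4 s j)^2))" for s
  have ranges: "{1..4::nat} = {1,2,3,4}" "{5..8::nat} = {5,6,7,8}" by auto
  have "Qform D (slot_vector s0 f v1 v2 v3 v4) = sum g (S0 D)" by (simp add: Qform_def g_def)
  also have "\<dots> = g s0 + sum g (S0 D - {s0})" using assms by (simp add: sum.remove)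
  also have "sum g (S0 D - {s0}) = 0" by (intro sum.neutral) (auto simp: g_def slot_vector_def)
  also have "g s0 = s0 * (if f then epsD D else 1) * (v1^2 + v2^2 + v3^2 + v4^2)"
    unfolding g_def ranges by (cases f) (simp_all add: slot_vector_def)
  finally show ?thesis by simp
qed

lemma Qform_add_disjoint:
  assumes "\<And>s j. x s j * y s j = 0"
  shows "Qform D (\<lambda>s j. x s j + y s j) = Qform D x + Qform D y"
proof -
  have sq: "(x s j + y s j)^2 = (x s j)^2 + (y s j)^2" for s j
    using assms[of s j] by (simp add: power2_eq_square algebra_simps)
  show ?thesis unfolding Qform_def sq by (simp add: sum.distrib algebra_simps)
qed

section \<open>Arithmetic of the real quadratic field\<close>

locale real_quadratic_field =
  fixes D :: nat
  assumes D1: "D > 1" and sqf: "squarefree D"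
begin

abbreviation sD where "sD \<equiv> sqrt (real D)"

definition inK :: "real \<Rightarrow> bool" where
  "inK x \<longleftrightarrow> (\<exists>a b::rat. x = of_rat a + of_rat b * sD)"

lemma sqrt_D_irrational: "sD \<notin> \<rat>" using sqrt_squarefree_irrational[OF D1 sqf] .

lemma sqrt_D_gt1: "sD > 1" using D1 by simp

lemma rat_coords_unique:
  assumes "of_rat a + of_rat b * sD = of_rat c + of_rat d * sD"
  shows "a = c \<and> b = d"
proof (cases "b = d")
  case True then show ?thesis using assms by (simp add: of_rat_eq_iff)
next
  case False
  have "of_rat (b - d) * sD = of_rat (c - a)" using assms by (simp add: of_rat_diff algebra_simps)
  then have "sD = of_rat ((c - a) / (b - d))" using False by (simp add: of_rat_divide field_simps of_rat_diff)
  then have "sD \<in> \<rat>" by simp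
  then show ?thesis using sqrt_D_irrational by simp
qed

lemma qconj_rat_coords: "qconj D (of_rat a + of_rat b * sD) = of_rat a - of_rat b * sD"
  unfolding qconj_def
proof (rule the_equality)
  show "\<exists>a' b'. of_rat a + of_rat b * sD = of_rat a' + of_rat b' * sD \<and>
          of_rat a - of_rat b * sD = of_rat a' - of_rat b' * sD" by blast
next
  fix y assume "\<exists>a' b'. of_rat a + of_rat b * sD = of_rat a' + of_rat b' * sD \<and> y = of_rat a' - of_rat b' * sD"
  then obtain a' b' where "of_rat a + of_rat b * sD = of_rat a' + of_rat b' * sD" "y = of_rat a' - of_rat b' * sD" by blast
  then show "y = of_rat a - of_rat b * sD" using rat_coords_unique by blast
qed

lemma inKE: assumes "inK x" obtains a b where "x = of_rat a + of_rat b * sD"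
  using assms unfolding inK_def by blast

lemma inKI: "x = of_rat a + of_rat b * sD \<Longrightarrow> inK x" unfolding inK_def by blast

lemma inK_add [intro]: "inK x \<Longrightarrow> inK y \<Longrightarrow> inK (x + y)"
proof (elim inKE)
  fix a b c d assume "x = of_rat a + of_rat b * sD" "y = of_rat c + of_rat d * sD"
  then have "x + y = of_rat (a+c) + of_rat (b+d) * sD" by (simp add: of_rat_add algebra_simps)
  then show ?thesis by (rule inKI)
qed

lemma inK_minus [intro]: "inK x \<Longrightarrow> inK (- x)"
proof (elim inKE)
  fix a b assume "x = of_rat a + of_rat b * sD"
  then have "- x = of_rat (-a) + of_rat (-b) * sD" by (simp add: of_rat_minus)
  then show ?thesis by (rule inKI)
qed

lemma inK_diff [intro]: "inK x \<Longrightarrow> inK y \<Longrightarrow> inK (x - y)"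
  using inK_add[of x "-y"] inK_minus[of y] by simp

lemma mult_rat_coords:
  "(of_rat a + of_rat b * sD) * (of_rat c + of_rat d * sD) =
    of_rat (a*c + b*d*of_nat D) + of_rat (a*d + b*c) * sD"
proof -
  have "(of_rat a + of_rat b * sD) * (of_rat c + of_rat d * sD) =
        of_rat a * of_rat c + of_rat b * of_rat d * (sD * sD) + (of_rat a * of_rat d + of_rat b * of_rat c) * sD"
    by (simp add: algebra_simps)
  also have "\<dots> = of_rat (a*c + b*d*of_nat D) + of_rat (a*d + b*c) * sD"
    by (simp add: of_rat_add of_rat_mult)
  finally show ?thesis .
qed

lemma inK_mult [intro]: "inK x \<Longrightarrow> inK y \<Longrightarrow> inK (x * y)"
proof (elim inKE)
  fix a b c d assume "x = of_rat a + of_rat b * sD" "y = of_rat c + of_rat d * sD"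
  then show ?thesis using mult_rat_coords by (intro inKI) simp
qed

lemma inK_of_int [intro]: "inK (of_int n)"
  by (rule inKI[where a="of_int n" and b=0]) simp

lemma inK_of_nat [intro]: "inK (of_nat n)"
  by (rule inKI[where a="of_nat n" and b=0]) simp

lemma inK_1 [intro]: "inK 1" and inK_0 [intro]: "inK 0"
  using inK_of_int[of 1] inK_of_int[of 0] by simp_all

lemma qconj_add: "inK x \<Longrightarrow> inK y \<Longrightarrow> qconj D (x + y) = qconj D x + qconj D y"
proof (elim inKE)
  fix a b c d assume x: "x = of_rat a + of_rat b * sD" and y: "y = of_rat c + of_rat d * sD"
  have "x + y = of_rat (a+c) + of_rat (b+d) * sD" using x y by (simp add: of_rat_add algebra_simps)
  then have "qconj D (x + y) = of_rat (a+c) - of_rat (b+d) * sD" by (simp only: qconj_rat_coords)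
  moreover have "qconj D x = of_rat a - of_rat b * sD" unfolding x by (rule qconj_rat_coords)
  moreover have "qconj D y = of_rat c - of_rat d * sD" unfolding y by (rule qconj_rat_coords)
  ultimately show ?thesis by (simp add: of_rat_add algebra_simps)
qed

lemma qconj_minus: "inK x \<Longrightarrow> qconj D (- x) = - qconj D x"
proof (elim inKE)
  fix a b assume x: "x = of_rat a + of_rat b * sD"
  have "- x = of_rat (-a) + of_rat (-b) * sD" using x by (simp add: of_rat_minus)
  then have "qconj D (- x) = of_rat (-a) - of_rat (-b) * sD" by (simp only: qconj_rat_coords)
  moreover have "qconj D x = of_rat a - of_rat b * sD" unfolding x by (rule qconj_rat_coords)
  ultimately show ?thesis by (simp add: of_rat_minus)
qed

lemma qconj_diff: "inK x \<Longrightarrow> inK y \<Longrightarrow> qconj D (x - y) = qconj D x - qconj D y"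
  using qconj_add[of x "-y"] qconj_minus[of y] by auto

lemma qconj_mult: "inK x \<Longrightarrow> inK y \<Longrightarrow> qconj D (x * y) = qconj D x * qconj D y"
proof (elim inKE)
  fix a b c d assume x: "x = of_rat a + of_rat b * sD" and y: "y = of_rat c + of_rat d * sD"
  have "x * y = of_rat (a*c + b*d*of_nat D) + of_rat (a*d + b*c) * sD" unfolding x y by (rule mult_rat_coords)
  then have "qconj D (x * y) = of_rat (a*c + b*d*of_nat D) - of_rat (a*d + b*c) * sD" by (simp only: qconj_rat_coords)
  moreover have qx: "qconj D x = of_rat a + of_rat (-b) * sD" unfolding x by (simp add: qconj_rat_coords of_rat_minus)
  moreover have qy: "qconj D y = of_rat c + of_rat (-d) * sD" unfolding y by (simp add: qconj_rat_coords of_rat_minus)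
  moreover have "qconj D x * qconj D y = of_rat (a*c + (-b)*(-d)*of_nat D) + of_rat (a*(-d) + (-b)*c) * sD"
    by (simp only: qx qy mult_rat_coords)
  moreover have "a*(-d) + (-b)*c = -(a*d+b*c)" "(-b)*(-d) = b*d" by simp_all
  moreover have "real_of_rat (- (a*d) - b*c) = - real_of_rat (a*d+b*c)"
    by (metis minus_add_distrib of_rat_minus diff_conv_add_uminus)
  ultimately show ?thesis by (simp add: of_rat_minus)
qed

lemma qconj_of_rat: "qconj D (of_rat q) = of_rat q"
  using qconj_rat_coords[of q 0] by simp

lemma qconj_of_int [simp]: "qconj D (of_int n) = of_int n"
  using qconj_of_rat[of "of_int n"] by simp

lemma qconj_of_nat [simp]: "qconj D (of_nat n) = of_nat n"
  using qconj_of_rat[of "of_nat n"] by simp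

lemma qconj_0 [simp]: "qconj D 0 = 0" and qconj_1 [simp]: "qconj D 1 = 1"
  using qconj_of_int[of 0] qconj_of_int[of 1] by simp_all

lemma inK_qconj [intro]: "inK x \<Longrightarrow> inK (qconj D x)"
proof (elim inKE)
  fix a b assume "x = of_rat a + of_rat b * sD"
  then show ?thesis by (intro inKI[where a=a and b="-b"]) (simp add: qconj_rat_coords of_rat_minus)
qed

lemma qconj_qconj [simp]: "inK x \<Longrightarrow> qconj D (qconj D x) = x"
proof (elim inKE)
  fix a b assume x: "x = of_rat a + of_rat b * sD"
  have q1: "qconj D x = of_rat a + of_rat (-b) * sD" using x by (simp add: qconj_rat_coords of_rat_minus)
  have "qconj D (qconj D x) = of_rat a - of_rat (-b) * sD" by (simp only: q1 qconj_rat_coords)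
  then show ?thesis using x by (simp add: of_rat_minus)
qed

lemma mult_qconj_Rats: "inK x \<Longrightarrow> x * qconj D x \<in> \<rat>"
proof (elim inKE)
  fix a b assume x: "x = of_rat a + of_rat b * sD"
  then have "x * qconj D x = of_rat a * of_rat a - of_rat b * of_rat b * (sD * sD)"
    by (simp add: qconj_rat_coords algebra_simps)
  then show ?thesis by simp
qed

lemma qconj_eq_0_iff: "inK x \<Longrightarrow> qconj D x = 0 \<longleftrightarrow> x = 0"
  by (metis qconj_0 qconj_qconj)

lemma qconj_inj: "inK x \<Longrightarrow> inK y \<Longrightarrow> qconj D x = qconj D y \<Longrightarrow> x = y"
  by (metis qconj_qconj)

lemma inK_inverse [intro]: "inK x \<Longrightarrow> inK (inverse x)"
proof (cases "x = 0")
  case True then show ?thesis using inK_0 by simp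
next
  case False
  assume x: "inK x"
  obtain q where q: "x * qconj D x = of_rat q" using mult_qconj_Rats[OF x] Rats_cases by blast
  have "qconj D x \<noteq> 0" using False qconj_eq_0_iff x by simp
  then have qn: "q \<noteq> 0" using q False by (metis mult_eq_0_iff of_rat_0)
  have "x * (qconj D x * of_rat (inverse q)) = 1"
    using q qn by (simp add: of_rat_inverse mult.assoc[symmetric])
  then have "inverse x = qconj D x * of_rat (inverse q)" by (rule inverse_unique)
  moreover have "inK (of_rat (inverse q))" by (rule inKI[where a="inverse q" and b=0]) simp
  ultimately show ?thesis using x by auto
qed

lemma inK_divide [intro]: "inK x \<Longrightarrow> inK y \<Longrightarrow> inK (x / y)"
  by (simp add: divide_inverse inK_inverse inK_mult)

lemma qconj_inverse: "inK x \<Longrightarrow> qconj D (inverse x) = inverse (qconj D x)"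
proof (cases "x = 0")
  case True then show ?thesis by simp
next
  case False
  assume x: "inK x"
  have "qconj D (x * inverse x) = 1" using False by simp
  then have "qconj D x * qconj D (inverse x) = 1" using qconj_mult[OF x inK_inverse[OF x]] by simp
  then show ?thesis using inverse_unique by metis
qed

lemma qconj_divide: "inK x \<Longrightarrow> inK y \<Longrightarrow> qconj D (x / y) = qconj D x / qconj D y"
  by (simp add: divide_inverse qconj_mult qconj_inverse inK_inverse)

lemma qconj_power: "inK x \<Longrightarrow> qconj D (x ^ n) = qconj D x ^ n"
proof (induction n)
  case (Suc n)
  have "inK (x ^ n)" by (induction n) (use Suc in auto)
  then show ?case using Suc by (simp add: qconj_mult)
qed simp

subsection \<open>The ring of integers\<close>

abbreviation w where "w \<equiv> omegaD D"
abbreviation w' where "w' \<equiv> omegaD' D"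

definition trace_w :: int where "trace_w = (if D mod 4 = 1 then 1 else 0)"
definition norm_w :: int where "norm_w = (if D mod 4 = 1 then (1 - int D) div 4 else - int D)"

lemma w_add_w': "w + w' = of_int trace_w"
  by (simp add: omegaD_def omegaD'_def trace_w_def field_simps)

lemma w'_eq: "w' = of_int trace_w - w" using w_add_w' by (simp add: algebra_simps)

lemma w_mult_w': "w * w' = of_int norm_w"
proof (cases "D mod 4 = 1")
  case True
  then have "int D mod 4 = 1" by presburger
  then have "4 * ((1 - int D) div 4) = (1 - int D)" by presburger
  then have "4 * real_of_int ((1 - int D) div 4) = 1 - real D"
    by (metis of_int_1 of_int_diff of_int_of_nat_eq of_int_mult of_int_numeral)
  then have "real_of_int ((1 - int D) div 4) = (1 - real D) / 4" by simp
  moreover have "(1 + sD) / 2 * ((1 - sD) / 2) = (1 - sD*sD)/4" by (simp add: field_simps)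
  ultimately show ?thesis using True by (simp add: omegaD_def omegaD'_def norm_w_def)
next
  case False
  then show ?thesis by (simp add: omegaD_def omegaD'_def norm_w_def)
qed

lemma w_sq: "w * w = of_int trace_w * w - of_int norm_w"
proof -
  have "w * w = w * (w + w') - w * w'" by (simp add: algebra_simps)
  then show ?thesis using w_add_w' w_mult_w' by (simp add: algebra_simps)
qed

lemma inK_w [intro]: "inK w"
proof (cases "D mod 4 = 1")
  case True
  then show ?thesis by (intro inKI[where a="1/2" and b="1/2"]) (simp add: omegaD_def of_rat_divide field_simps)
next
  case False
  then show ?thesis by (intro inKI[where a="0" and b="1"]) (simp add: omegaD_def)
qed

lemma qconj_w [simp]: "qconj D w = w'"
proof (cases "D mod 4 = 1")
  case True
  have e: "w = of_rat (1/2) + of_rat (1/2) * sD" using True by (simp add: omegaD_def of_rat_divide field_simps)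
  have "qconj D w = of_rat (1/2) - of_rat (1/2) * sD" by (simp only: e qconj_rat_coords)
  then show ?thesis using True by (simp add: omegaD'_def of_rat_divide field_simps)
next
  case False
  have e: "w = of_rat 0 + of_rat 1 * sD" using False by (simp add: omegaD_def)
  have "qconj D w = of_rat 0 - of_rat 1 * sD" by (simp only: e qconj_rat_coords)
  then show ?thesis using False by (simp add: omegaD'_def)
qed

lemma w_gt1: "w > 1"
proof -
  have "sD > 1" by (rule sqrt_D_gt1)
  then show ?thesis by (simp add: omegaD_def)
qed

lemma w'_neg: "w' < 0"
proof -
  have "sD > 1" by (rule sqrt_D_gt1)
  then show ?thesis by (simp add: omegaD'_def)
qed

lemma w_irrational: "w \<notin> \<rat>"
proof
  assume "w \<in> \<rat>"
  then have "2 * w - (if D mod 4 = 1 then 1 else w) \<in> \<rat>" by auto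
  moreover have "2 * w - (if D mod 4 = 1 then 1 else w) = sD" by (simp add: omegaD_def field_simps)
  ultimately show False using sqrt_D_irrational by simp
qed

definition delta :: real where "delta = w - w'"

lemma delta_pos: "delta > 0" using w_gt1 w'_neg by (simp add: delta_def)

lemma OKI: "x = of_int a + of_int b * w \<Longrightarrow> x \<in> OK D" by (auto simp: OK_def)

lemma OKE: assumes "x \<in> OK D" obtains a b where "x = of_int a + of_int b * w"
  using assms by (auto simp: OK_def)

lemma OK_inK: "x \<in> OK D \<Longrightarrow> inK x"
proof (elim OKE)
  fix a b assume "x = of_int a + of_int b * w"
  then show ?thesis using inK_add[OF inK_of_int inK_mult[OF inK_of_int inK_w]] by simp
qed

lemma OK_add [intro]: "x \<in> OK D \<Longrightarrow> y \<in> OK D \<Longrightarrow> x + y \<in> OK D"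
proof (elim OKE)
  fix a b c d assume "x = of_int a + of_int b * w" "y = of_int c + of_int d * w"
  then show ?thesis by (intro OKI[where a="a+c" and b="b+d"]) (simp add: algebra_simps)
qed

lemma OK_minus [intro]: "x \<in> OK D \<Longrightarrow> - x \<in> OK D"
proof (elim OKE)
  fix a b assume "x = of_int a + of_int b * w"
  then show ?thesis by (intro OKI[where a="-a" and b="-b"]) (simp add: algebra_simps)
qed

lemma OK_diff [intro]: "x \<in> OK D \<Longrightarrow> y \<in> OK D \<Longrightarrow> x - y \<in> OK D"
  using OK_add[of x "-y"] OK_minus[of y] by simp

lemma OK_mult [intro]: "x \<in> OK D \<Longrightarrow> y \<in> OK D \<Longrightarrow> x * y \<in> OK D"
proof (elim OKE)
  fix a b c d assume xy: "x = of_int a + of_int b * w" "y = of_int c + of_int d * w"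
  have "x * y = of_int a * of_int c + (of_int a * of_int d + of_int b * of_int c) * w + of_int b * of_int d * (w * w)"
    using xy by (simp add: algebra_simps)
  also have "\<dots> = of_int (a*c - b*d*norm_w) + of_int (a*d + b*c + b*d*trace_w) * w"
    unfolding w_sq by (simp add: algebra_simps)
  finally show ?thesis by (rule OKI)
qed

lemma OK_of_int [intro]: "of_int n \<in> OK D" by (rule OKI[where a=n and b=0]) simp
lemma OK_of_nat [intro]: "of_nat n \<in> OK D" using OK_of_int[of "int n"] by simp
lemma OK_1 [intro]: "1 \<in> OK D" and OK_0 [intro]: "0 \<in> OK D"
  using OK_of_int[of 1] OK_of_int[of 0] by simp_all
lemma OK_w [intro]: "w \<in> OK D" by (rule OKI[where a=0 and b=1]) simp
lemma OK_w' [intro]: "w' \<in> OK D" using w'_eq OK_diff[OF OK_of_int OK_w] by simp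

lemma qconj_OK_coords: "qconj D (of_int a + of_int b * w) = of_int a + of_int b * w'"
proof -
  have "qconj D (of_int a + of_int b * w) = qconj D (of_int a) + qconj D (of_int b) * qconj D w"
    using qconj_add[OF inK_of_int inK_mult[OF inK_of_int inK_w]] qconj_mult[OF inK_of_int inK_w] by simp
  then show ?thesis by simp
qed

lemma qconj_OK [intro]: "x \<in> OK D \<Longrightarrow> qconj D x \<in> OK D"
proof (elim OKE)
  fix a b assume "x = of_int a + of_int b * w"
  then have "qconj D x = of_int a + of_int b * w'" by (simp only: qconj_OK_coords)
  then have "qconj D x = of_int (a + b*trace_w) + of_int (-b) * w" by (simp add: w'_eq algebra_simps)
  then show ?thesis by (rule OKI)
qed

lemma mult_qconj_Ints: "x \<in> OK D \<Longrightarrow> x * qconj D x \<in> \<int>"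
proof (elim OKE)
  fix a b assume x: "x = of_int a + of_int b * w"
  then have "qconj D x = of_int a + of_int b * w'" by (simp only: qconj_OK_coords)
  then have "x * qconj D x = of_int a * of_int a + of_int a * of_int b * (w + w') + of_int b * of_int b * (w * w')"
    using x by (simp add: algebra_simps)
  also have "\<dots> = of_int (a*a + a*b*trace_w + b*b*norm_w)" by (simp add: w_add_w' w_mult_w')
  finally show ?thesis by simp
qed

subsection \<open>Convergents of \<open>\<omega>\<^sub>D\<close>\<close>

declare cfrem.simps(2) [simp del]

abbreviation xi where "xi k \<equiv> cfrem w k"
abbreviation uu where "uu k \<equiv> u D k"
abbreviation PP where "PP j \<equiv> fst (pq (u D) j)"
abbreviation QQ where "QQ j \<equiv> snd (pq (u D) j)"
abbreviation A where "A j \<equiv> alphaS D j"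
definition B :: "nat \<Rightarrow> real" where "B j = of_int (PP j) - of_int (QQ j) * w"

lemma A_def': "A j = of_int (PP j) - of_int (QQ j) * w'" by (simp add: alphaS_def)

lemma uu_def': "uu k = \<lfloor>xi k\<rfloor>" by (simp add: u_def)

lemma xi_irrational_inK: "xi k \<notin> \<rat> \<and> inK (xi k)"
proof (induction k)
  case 0 then show ?case using w_irrational inK_w by simp
next
  case (Suc k)
  have fr: "frac (xi k) = xi k - of_int \<lfloor>xi k\<rfloor>" by (simp add: frac_def)
  have "frac (xi k) \<notin> \<rat>"
  proof
    assume "frac (xi k) \<in> \<rat>"
    then have "frac (xi k) + of_int \<lfloor>xi k\<rfloor> \<in> \<rat>" by auto
    then show False using Suc fr by simp
  qed
  then have "1 / frac (xi k) \<notin> \<rat>" by (metis Rats_divide Rats_1 divide_divide_eq_right div_by_1 one_divide_eq_0_iff nonzero_mult_div_cancel_left mult_1 Rats_0)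
  moreover have "inK (1 / frac (xi k))" using Suc fr by (intro inK_divide inK_diff inK_1 inK_of_int) auto
  ultimately show ?case by (simp add: cfrem.simps)
qed

lemma xi_irrational: "xi k \<notin> \<rat>" using xi_irrational_inK by blast
lemma inK_xi [intro]: "inK (xi k)" using xi_irrational_inK by blast

lemma frac_xi_pos: "frac (xi k) > 0"
proof -
  have "frac (xi k) \<noteq> 0" using xi_irrational[of k] by (metis Ints_subset_Rats frac_eq_0_iff subsetD)
  then show ?thesis using frac_ge_0[of "xi k"] by linarith
qed

lemma xi_Suc: "xi (Suc k) = 1 / frac (xi k)" by (simp add: cfrem.simps)

lemma xi_gt1: "k \<ge> 1 \<Longrightarrow> xi k > 1"
proof (cases k)
  case (Suc m)
  have "1 / frac (xi m) > 1" using frac_xi_pos[of m] frac_lt_1[of "xi m"] by (simp add: less_divide_eq)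
  then show ?thesis using Suc xi_Suc[of m] by simp
qed simp

lemma xi_eq_uu_plus: "xi k = of_int (uu k) + 1 / xi (Suc k)"
  using frac_xi_pos[of k] xi_Suc[of k] by (simp add: uu_def' frac_def)

lemma uu_pos: "uu k \<ge> 1"
proof (cases k)
  case 0
  then show ?thesis using w_gt1 by (simp add: uu_def')
next
  case (Suc m)
  then show ?thesis using xi_gt1[of k] by (simp add: uu_def')
qed

lemma uu_less_xi: "of_int (uu k) < xi k"
proof -
  have "xi (Suc k) > 0" using xi_gt1[of "Suc k"] by simp
  then show ?thesis using xi_eq_uu_plus[of k] by simp
qed

lemma convergent_det: "QQ (Suc j) * PP j - PP (Suc j) * QQ j = (-1)^j"
proof (induction j rule: nat_less_induct)
  case (1 j)
  show ?case
  proof (cases j)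
    case 0 then show ?thesis by simp
  next
    case (Suc m)
    have "QQ (Suc (Suc m)) * PP (Suc m) - PP (Suc (Suc m)) * QQ (Suc m) =
          - (QQ (Suc m) * PP m - PP (Suc m) * QQ m)"
      by (simp add: algebra_simps)
    then show ?thesis using 1 Suc by simp
  qed
qed

lemma B_simps: "B 0 = 1" "B (Suc 0) = of_int (uu 0) - w"
  "B (Suc (Suc j)) = of_int (uu (Suc j)) * B (Suc j) + B j"
  by (simp_all add: B_def algebra_simps)

lemma A_simps: "A 0 = 1" "A (Suc 0) = of_int (uu 0) - w'"
  "A (Suc (Suc j)) = of_int (uu (Suc j)) * A (Suc j) + A j"
  by (simp_all add: A_def' algebra_simps)

lemma B_Suc: "B (Suc j) = - B j / xi (Suc j)"
proof (induction j rule: nat_less_induct)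
  case (1 j)
  show ?case
  proof (cases j)
    case 0
    have "xi 1 = 1 / frac w" using xi_Suc[of 0] by simp
    have "xi 1 > 0" using xi_gt1[of 1] by simp
    have e: "xi 1 * (w - of_int (floor w)) = 1" using xi_Suc[of 0] frac_xi_pos[of 0] by (simp add: frac_def)
    then show ?thesis using 0 \<open>xi 1 > 0\<close> by (simp add: B_simps uu_def' field_simps)
  next
    case (Suc m)
    have IH: "B (Suc m) = - B m / xi (Suc m)" using 1 Suc by simp
    have rp: "xi (Suc m) > 0" "xi (Suc (Suc m)) > 0" using xi_gt1[of "Suc m"] xi_gt1[of "Suc (Suc m)"] by auto
    have "B m = - xi (Suc m) * B (Suc m)" using IH rp by (simp add: field_simps)
    then have "B (Suc (Suc m)) = (of_int (uu (Suc m)) - xi (Suc m)) * B (Suc m)"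
      by (simp add: B_simps algebra_simps)
    also have "of_int (uu (Suc m)) - xi (Suc m) = - 1 / xi (Suc (Suc m))" using xi_eq_uu_plus[of "Suc m"] by simp
    finally show ?thesis using Suc by simp
  qed
qed

lemma B_nonzero: "B j \<noteq> 0"
proof (induction j)
  case 0 then show ?case by (simp add: B_simps)
next
  case (Suc j) then show ?case using B_Suc[of j] xi_gt1[of "Suc j"] by simp
qed

lemma B_pos_iff_even: "(B j > 0) = even j"
proof (induction j)
  case 0 then show ?case by (simp add: B_simps)
next
  case (Suc j)
  have "xi (Suc j) > 0" using xi_gt1[of "Suc j"] by simp
  then have "(B j / xi (Suc j) < 0) = (B j < 0)" by (simp add: divide_less_0_iff)
  then have "(B (Suc j) > 0) = (B j < 0)" using B_Suc[of j] by simp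
  then show ?case using Suc B_nonzero[of j] by auto
qed

lemma abs_B_Suc: "\<bar>B (Suc j)\<bar> = \<bar>B j\<bar> / xi (Suc j)"
  using B_Suc[of j] xi_gt1[of "Suc j"] by (simp add: abs_div)

lemma abs_B_decreasing: "\<bar>B (Suc j)\<bar> < \<bar>B j\<bar>"
  using abs_B_Suc[of j] xi_gt1[of "Suc j"] B_nonzero[of j] by (simp add: divide_less_eq)

lemma abs_B_le1: "\<bar>B j\<bar> \<le> 1"
proof (induction j)
  case 0 then show ?case by (simp add: B_simps)
next
  case (Suc j) then show ?case using abs_B_decreasing[of j] by simp
qed

lemma abs_B_half: "\<bar>B (Suc (Suc j))\<bar> \<le> \<bar>B j\<bar> / 2"
proof -
  have r1: "xi (Suc j) > 1" "xi (Suc (Suc j)) > 1" using xi_gt1 by auto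
  have "xi (Suc j) = of_int (uu (Suc j)) + 1 / xi (Suc (Suc j))" by (rule xi_eq_uu_plus)
  then have "xi (Suc j) \<ge> 1 + 1 / xi (Suc (Suc j))" using uu_pos[of "Suc j"] by simp
  then have "xi (Suc j) * xi (Suc (Suc j)) \<ge> xi (Suc (Suc j)) + 1" using r1 by (simp add: field_simps)
  then have prod: "xi (Suc j) * xi (Suc (Suc j)) \<ge> 2" using r1 by simp
  have "\<bar>B (Suc (Suc j))\<bar> = \<bar>B j\<bar> / (xi (Suc j) * xi (Suc (Suc j)))"
    using abs_B_Suc[of "Suc j"] abs_B_Suc[of j] by simp
  also have "\<dots> \<le> \<bar>B j\<bar> / 2" using prod by (intro divide_left_mono) auto
  finally show ?thesis .
qed

lemma abs_B_even_le_power: "\<bar>B (2*k)\<bar> \<le> (1/2)^k"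
proof (induction k)
  case 0 then show ?case by (simp add: B_simps)
next
  case (Suc k)
  have "\<bar>B (2 * Suc k)\<bar> \<le> \<bar>B (2*k)\<bar> / 2" using abs_B_half[of "2*k"] by simp
  then show ?case using Suc by simp
qed

lemma A_ge1_less_Suc: "A j \<ge> 1 \<and> A j < A (Suc j)"
proof (induction j rule: nat_less_induct)
  case (1 j)
  show ?case
  proof (cases j)
    case 0 then show ?thesis using w'_neg uu_pos[of 0] by (simp add: A_simps)
  next
    case (Suc m)
    have "A m \<ge> 1" "A (Suc m) \<ge> 1" using 1 Suc by auto
    moreover have "real_of_int (uu (Suc m)) \<ge> 1" using uu_pos[of "Suc m"] by simp
    ultimately have "A (Suc (Suc m)) > A (Suc m)"
      unfolding A_simps by (smt (verit) mult_le_cancel_right1)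
    then show ?thesis using Suc \<open>A (Suc m) \<ge> 1\<close> by simp
  qed
qed

lemma A_pos: "A j > 0" using A_ge1_less_Suc[of j] by simp

lemma A_mono: "i \<le> j \<Longrightarrow> A i \<le> A j"
proof (induction j)
  case (Suc j) then show ?case using A_ge1_less_Suc[of j] by (cases "i = Suc j") auto
qed simp

lemma A_strict_mono: "i < j \<Longrightarrow> A i < A j"
  using A_mono[of "Suc i" j] A_ge1_less_Suc[of i] by simp

lemma A_OK [intro]: "A j \<in> OK D"
  unfolding A_def' by (intro OK_diff OK_mult OK_of_int OK_w')

lemma B_OK [intro]: "B j \<in> OK D"
  unfolding B_def by (intro OK_diff OK_mult OK_of_int OK_w)

lemma qconj_A: "qconj D (A j) = B j"
proof -
  have "A j = of_int (PP j - QQ j * trace_w) + of_int (QQ j) * w" by (simp add: A_def' w'_eq algebra_simps)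
  then have "qconj D (A j) = of_int (PP j - QQ j * trace_w) + of_int (QQ j) * w'" by (simp only: qconj_OK_coords)
  then show ?thesis by (simp add: B_def w'_eq algebra_simps)
qed

lemma qconj_B: "qconj D (B j) = A j"
  using qconj_A[of j] qconj_qconj[OF OK_inK[OF A_OK[of j]]] by simp

lemma A_B_cross_det: "A j * B (Suc j) - A (Suc j) * B j = - ((-1)^j) * delta"
proof -
  have "A j * B (Suc j) - A (Suc j) * B j =
        of_int (PP (Suc j) * QQ j - PP j * QQ (Suc j)) * (w - w')"
    by (simp add: A_def' B_def algebra_simps)
  also have "PP (Suc j) * QQ j - PP j * QQ (Suc j) = - ((-1)^j)" using convergent_det[of j] by (simp add: algebra_simps)
  finally show ?thesis by (simp add: delta_def)
qed

lemma A_mult_B_Ints: "A j * B j \<in> \<int>"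
  using mult_qconj_Ints[OF A_OK[of j]] qconj_A[of j] by simp

subsection \<open>Periodicity of the continued fraction\<close>

lemma xi_Suc_eq: "xi (Suc k) = 1 / (xi k - of_int (uu k))"
  using xi_Suc[of k] by (simp add: frac_def uu_def')

lemma qconj_xi_Suc: "qconj D (xi (Suc k)) = 1 / (qconj D (xi k) - of_int (uu k))"
proof -
  have "qconj D (xi (Suc k)) = qconj D 1 / qconj D (xi k - of_int (uu k))"
    unfolding xi_Suc_eq by (intro qconj_divide) auto
  also have "qconj D (xi k - of_int (uu k)) = qconj D (xi k) - of_int (uu k)"
    using qconj_diff[OF inK_xi inK_of_int] by simp
  finally show ?thesis by simp
qed

lemma qconj_xi_Suc_reduced: "qconj D (xi (Suc k)) > -1 \<and> qconj D (xi (Suc k)) < 0"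
proof (induction k)
  case 0
  have "qconj D (xi 0) - of_int (uu 0) < -1" using w'_neg uu_pos[of 0] by simp
  then show ?case unfolding qconj_xi_Suc by (simp add: divide_less_0_iff less_divide_eq)
next
  case (Suc k)
  have "qconj D (xi (Suc k)) - of_int (uu (Suc k)) < -1" using Suc uu_pos[of "Suc k"] by simp
  then show ?case unfolding qconj_xi_Suc[of "Suc k"] by (simp add: divide_less_0_iff less_divide_eq)
qed

lemma qconj_xi_reduced: "k \<ge> 1 \<Longrightarrow> qconj D (xi k) > -1 \<and> qconj D (xi k) < 0"
  using qconj_xi_Suc_reduced[of "k - 1"] by simp

lemma uu_from_qconj_xi_Suc: "k \<ge> 1 \<Longrightarrow> uu k = \<lfloor>- 1 / qconj D (xi (Suc k))\<rfloor>"
proof -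
  assume k: "k \<ge> 1"
  define c where "c = qconj D (xi k)"
  have c: "c > -1" "c < 0" using qconj_xi_reduced[OF k] by (auto simp: c_def)
  have "c - of_int (uu k) < 0" using c uu_pos[of k] by simp
  then have "- 1 / qconj D (xi (Suc k)) = of_int (uu k) - c"
    unfolding qconj_xi_Suc c_def[symmetric] by simp
  moreover have "\<lfloor>of_int (uu k) - c\<rfloor> = uu k" by (rule floor_unique) (use c in auto)
  ultimately show ?thesis by simp
qed

lemma xi_Suc_inj: "i \<ge> 1 \<Longrightarrow> j \<ge> 1 \<Longrightarrow> xi (Suc i) = xi (Suc j) \<Longrightarrow> xi i = xi j"
  using xi_eq_uu_plus[of i] xi_eq_uu_plus[of j] uu_from_qconj_xi_Suc[of i] uu_from_qconj_xi_Suc[of j] by simp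

lemma xi_eq_A_B: "k \<ge> 1 \<Longrightarrow> xi k = - (B (k-1) * A k) / (A k * B k)"
proof -
  assume "k \<ge> 1"
  then obtain m where k: "k = Suc m" by (cases k) auto
  have "B k = - B m / xi k" using B_Suc[of m] k by simp
  moreover have "xi k > 1" using xi_gt1[of k] k by simp
  ultimately have "B k * xi k = - B m" by (simp add: field_simps)
  then have "xi k = - B m / B k" using B_nonzero[of k] by (simp add: field_simps)
  then show ?thesis using A_pos[of k] k by simp
qed

lemma abs_cross_le_delta: "\<bar>B j * A (Suc j)\<bar> \<le> delta \<and> \<bar>A j * B (Suc j)\<bar> \<le> delta"
proof -
  have d: "A j * B (Suc j) - A (Suc j) * B j = - ((-1)^j) * delta" by (rule A_B_cross_det)
  have "\<bar>A j * B (Suc j) - A (Suc j) * B j\<bar> = delta" using d delta_pos by (simp add: abs_mult)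
  moreover have "(A j * B (Suc j)) * (A (Suc j) * B j) < 0"
  proof -
    have "B j * B (Suc j) < 0" using B_pos_iff_even[of j] B_pos_iff_even[of "Suc j"] B_nonzero[of j] B_nonzero[of "Suc j"]
      by (cases "even j") (auto simp: mult_pos_neg mult_neg_pos)
    moreover have "A j * A (Suc j) > 0" using A_pos by simp
    ultimately have "(A j * A (Suc j)) * (B j * B (Suc j)) < 0" by (simp add: mult_pos_neg)
    then show ?thesis by (simp add: algebra_simps)
  qed
  ultimately show ?thesis by (smt (verit) mult_nonneg_nonneg mult_nonpos_nonpos mult.commute)
qed

lemma qconj_cross: "qconj D (B j * A (Suc j)) = A j * B (Suc j)"
  using qconj_mult[OF OK_inK[OF B_OK] OK_inK[OF A_OK]] qconj_A qconj_B by simp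

lemma abs_A_mult_B_Suc_le_delta: "\<bar>A (Suc j) * B (Suc j)\<bar> \<le> delta"
proof -
  have "\<bar>A (Suc j) * B (Suc j)\<bar> \<le> \<bar>A (Suc j) * B j\<bar>"
    using abs_B_decreasing[of j] A_pos[of "Suc j"] by (simp add: abs_mult)
  then show ?thesis using abs_cross_le_delta[of j] by (simp add: mult.commute)
qed

lemma finite_OK_bounded: "finite {x \<in> OK D. \<bar>x\<bar> \<le> c \<and> \<bar>qconj D x\<bar> \<le> c}"
proof -
  define Bb where "Bb = 2 * c / delta"
  define M where "M = \<lceil>\<bar>c\<bar> + \<bar>Bb\<bar> * w + \<bar>Bb\<bar>\<rceil>"
  have "{x \<in> OK D. \<bar>x\<bar> \<le> c \<and> \<bar>qconj D x\<bar> \<le> c} \<subseteq>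
        (\<lambda>(a, b). of_int a + of_int b * w) ` ({-M..M} \<times> {-M..M})"
  proof
    fix x assume x: "x \<in> {x \<in> OK D. \<bar>x\<bar> \<le> c \<and> \<bar>qconj D x\<bar> \<le> c}"
    then have "x \<in> OK D" by simp
    then obtain a b where ab: "x = of_int a + of_int b * w" by (rule OKE)
    have qx: "qconj D x = of_int a + of_int b * w'" using ab by (simp only: qconj_OK_coords)
    have "x - qconj D x = of_int b * delta" using ab qx by (simp add: delta_def algebra_simps)
    moreover have "\<bar>x - qconj D x\<bar> \<le> 2 * c" using x by auto
    ultimately have "\<bar>of_int b\<bar> * delta \<le> 2 * c" using delta_pos by (simp add: abs_mult)
    then have bB: "\<bar>real_of_int b\<bar> \<le> Bb" using delta_pos by (simp add: Bb_def field_simps)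
    have "\<bar>real_of_int a\<bar> = \<bar>x - of_int b * w\<bar>" using ab by simp
    also have "\<dots> \<le> \<bar>x\<bar> + \<bar>of_int b\<bar> * w" using abs_triangle_ineq4[of x "of_int b * w"] w_gt1 by (simp add: abs_mult)
    also have "\<dots> \<le> \<bar>c\<bar> + \<bar>Bb\<bar> * w" using x bB w_gt1 by (intro add_mono mult_right_mono) auto
    finally have aB: "\<bar>real_of_int a\<bar> \<le> \<bar>c\<bar> + \<bar>Bb\<bar> * w" .
    have ceil: "\<bar>c\<bar> + \<bar>Bb\<bar> * w + \<bar>Bb\<bar> \<le> of_int M" unfolding M_def by (rule le_of_int_ceiling)
    have "0 \<le> \<bar>Bb\<bar> * w" using w_gt1 by simp
    moreover have "real_of_int \<bar>a\<bar> = \<bar>real_of_int a\<bar>" "real_of_int \<bar>b\<bar> = \<bar>real_of_int b\<bar>" by simp_all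
    ultimately have "real_of_int \<bar>a\<bar> \<le> of_int M" using aB ceil by linarith
    then have "\<bar>a\<bar> \<le> M" by (simp only: of_int_le_iff)
    moreover have "real_of_int \<bar>b\<bar> \<le> of_int M" using bB ceil \<open>0 \<le> \<bar>Bb\<bar> * w\<close> \<open>real_of_int \<bar>b\<bar> = \<bar>real_of_int b\<bar>\<close> by linarith
    then have "\<bar>b\<bar> \<le> M" by (simp only: of_int_le_iff)
    ultimately show "x \<in> (\<lambda>(a, b). of_int a + of_int b * w) ` ({-M..M} \<times> {-M..M})"
      using ab by (auto intro!: image_eqI[where x="(a,b)"])
  qed
  then show ?thesis by (rule finite_subset) auto
qed

text \<open>For \<open>k \<ge> 1\<close>, \<open>\<xi>\<^sub>k\<close> is a quotient of an element of \<open>O\<^sub>K\<close> that is bounded together with its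
  conjugate by an integer of absolute value at most \<open>\<delta>\<close>: only finitely many values occur.\<close>
lemma finite_xi_range: "finite (xi ` {1..})"
proof -
  define X where "X = {x \<in> OK D. \<bar>x\<bar> \<le> delta \<and> \<bar>qconj D x\<bar> \<le> delta}"
  define M where "M = \<lceil>delta\<rceil>"
  have "xi ` {1..} \<subseteq> (\<lambda>(x, n). - x / of_int n) ` (X \<times> {-M..M})"
  proof
    fix y assume "y \<in> xi ` {1..}"
    then obtain k where k: "k \<ge> 1" "y = xi k" by auto
    then obtain m where km: "k = Suc m" by (cases k) auto
    obtain n where n: "A k * B k = of_int n" using A_mult_B_Ints[of k] Ints_cases by blast
    have "\<bar>real_of_int n\<bar> \<le> delta" using abs_A_mult_B_Suc_le_delta[of m] n km by simp
    moreover have "delta \<le> of_int M" unfolding M_def by (rule le_of_int_ceiling)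
    moreover have "real_of_int \<bar>n\<bar> = \<bar>real_of_int n\<bar>" by simp
    ultimately have "real_of_int \<bar>n\<bar> \<le> of_int M" by linarith
    then have "\<bar>n\<bar> \<le> M" by (simp only: of_int_le_iff)
    moreover have "B m * A k \<in> X" unfolding X_def
      using abs_cross_le_delta[of m] qconj_cross[of m] km OK_mult[OF B_OK A_OK] by simp
    moreover have "k - 1 = m" using km by simp
    then have "y = - (B m * A k) / (A k * B k)" using xi_eq_A_B[OF k(1)] k(2) by metis
    then have "y = - (B m * A k) / of_int n" using n by metis
    ultimately show "y \<in> (\<lambda>(x, n). - x / of_int n) ` (X \<times> {-M..M})"
      by (auto intro!: image_eqI[where x="(B m * A k, n)"])
  qed
  moreover have "finite X" unfolding X_def by (rule finite_OK_bounded)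
  ultimately show ?thesis by (meson finite_SigmaI finite_atLeastAtMost_int finite_imageI finite_subset)
qed

lemma xi_repeats: "\<exists>a b. 1 \<le> a \<and> a < b \<and> xi a = xi b"
proof -
  have "\<not> inj_on xi {1..}"
    using finite_xi_range finite_imageD infinite_Ici by blast
  then obtain i j where ij: "i \<in> {1..}" "j \<in> {1..}" "i \<noteq> j" "xi i = xi j" unfolding inj_on_def by blast
  show ?thesis
  proof (cases "i < j")
    case True then show ?thesis using ij by auto
  next
    case False then show ?thesis using ij by (intro exI[of _ j] exI[of _ i]) auto
  qed
qed

lemma xi_repeat_from_1: "1 \<le> a \<Longrightarrow> a < b \<Longrightarrow> xi a = xi b \<Longrightarrow> xi 1 = xi (1 + (b - a))"
proof (induction a arbitrary: b)
  case 0 then show ?case by simp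
next
  case (Suc a)
  show ?case
  proof (cases "a = 0")
    case True then show ?thesis using Suc by simp
  next
    case False
    obtain b' where b: "b = Suc b'" using Suc by (cases b) auto
    have "xi a = xi b'" using xi_Suc_inj[of a b'] Suc b False by simp
    then have "xi 1 = xi (1 + (b' - a))" using Suc b False by simp
    then show ?thesis using b by simp
  qed
qed

lemma xi_periodic_from_1: "xi (1 + p) = xi 1 \<Longrightarrow> k \<ge> 1 \<Longrightarrow> xi (k + p) = xi k"
proof (induction k)
  case 0 then show ?case by simp
next
  case (Suc k)
  show ?case
  proof (cases "k = 0")
    case True then show ?thesis using Suc by simp
  next
    case False
    then have "xi (k + p) = xi k" using Suc by simp
    then show ?thesis using xi_Suc[of "k + p"] xi_Suc[of k] by simp
  qed
qed

definition is_period :: "nat \<Rightarrow> bool" where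
  "is_period t \<longleftrightarrow> t > 0 \<and> (\<forall>i\<ge>1. uu (i + t) = uu i)"

lemma is_period_if_xi_repeats: "t > 0 \<Longrightarrow> xi (1 + t) = xi 1 \<Longrightarrow> is_period t"
  unfolding is_period_def using xi_periodic_from_1 by (simp add: uu_def')

lemma ex_is_period: "\<exists>t. is_period t"
proof -
  obtain a b where ab: "1 \<le> a" "a < b" "xi a = xi b" using xi_repeats by blast
  then have "xi 1 = xi (1 + (b - a))" by (rule xi_repeat_from_1)
  then show ?thesis using is_period_if_xi_repeats[of "b - a"] ab by auto
qed

abbreviation s where "s \<equiv> period D"

lemma is_period_period: "is_period s"
proof -
  obtain t where "is_period t" using ex_is_period by blast
  then show ?thesis unfolding period_def is_period_def by (rule LeastI)
qed

lemma period_pos: "s > 0" using is_period_period by (simp add: is_period_def)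

lemma period_least: "is_period t \<Longrightarrow> s \<le> t"
  unfolding period_def is_period_def by (rule Least_le)

lemma is_period_diff: "is_period t \<Longrightarrow> is_period t' \<Longrightarrow> t < t' \<Longrightarrow> is_period (t' - t)"
proof -
  assume h1: "is_period t" and h2: "is_period t'" and lt: "t < t'"
  define d where "d = t' - t"
  have t'd: "t' = d + t" using lt by (simp add: d_def)
  have "uu (i + d) = uu i" if i: "i \<ge> 1" for i
  proof -
    have "uu (i + d + t) = uu (i + d)" using h1 i unfolding is_period_def by simp
    moreover have "i + d + t = i + t'" using t'd by simp
    moreover have "uu (i + t') = uu i" using h2 i unfolding is_period_def by simp
    ultimately show ?thesis by simp
  qed
  moreover have "d > 0" using lt by (simp add: d_def)
  ultimately show ?thesis unfolding is_period_def d_def by simp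
qed

lemma period_dvd: "is_period t \<Longrightarrow> s dvd t"
proof (induction t rule: less_induct)
  case (less t)
  have "s \<le> t" using less period_least by simp
  show ?case
  proof (cases "s = t")
    case True then show ?thesis by simp
  next
    case False
    then have "is_period (t - s)" using is_period_diff[OF is_period_period less.prems] \<open>s \<le> t\<close> by simp
    moreover have "t - s < t" using period_pos \<open>s \<le> t\<close> False by simp
    ultimately have "s dvd (t - s)" using less.IH by blast
    then have "s dvd (t - s) + s" by simp
    then show ?thesis using \<open>s \<le> t\<close> by simp
  qed
qed

lemma xi_eq_cont_frac: "xi k = cont_frac (\<lambda>n. uu (k + n)) m (xi (k + m))"
proof (induction m arbitrary: k)
  case 0 then show ?case by simp
next
  case (Suc m)
  have "xi k = of_int (uu k) + 1 / xi (Suc k)" by (rule xi_eq_uu_plus)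
  also have "xi (Suc k) = cont_frac (\<lambda>n. uu (Suc k + n)) m (xi (Suc k + m))" by (rule Suc.IH)
  finally show ?case by simp
qed

text \<open>Both \<open>\<xi>\<^sub>1\<close> and \<open>\<xi>\<^sub>1\<^sub>+\<^sub>s\<close> are fixed points of the contraction \<open>z \<mapsto> [u\<^sub>1; \<dots>, u\<^sub>p, z]\<close>
  given by any repetition \<open>\<xi>\<^sub>a = \<xi>\<^sub>a\<^sub>+\<^sub>p\<close>, so the complete quotients have period \<open>s\<close>.\<close>
lemma xi_add_period: "k \<ge> 1 \<Longrightarrow> xi (k + s) = xi k"
proof -
  assume k: "k \<ge> 1"
  obtain a b where ab: "1 \<le> a" "a < b" "xi a = xi b" using xi_repeats by blast
  define p where "p = b - a"
  have rp: "xi (1 + p) = xi 1" using xi_repeat_from_1[OF ab] by (simp add: p_def)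
  have p: "p \<ge> 1" using ab by (simp add: p_def)
  define G where "G = cont_frac (\<lambda>n. uu (1 + n)) p"
  have pos: "\<forall>n. (\<lambda>n. uu (1 + n)) n \<ge> 1" using uu_pos by simp
  have f1: "G (xi 1) = xi 1" using xi_eq_cont_frac[of 1 p] rp by (simp add: G_def)
  have sh: "(\<lambda>n. uu (1 + s + n)) = (\<lambda>n. uu (1 + n))"
  proof
    fix n
    have per: "\<forall>i\<ge>1. uu (i + s) = uu i" using is_period_period unfolding is_period_def by simp
    have "uu (1 + s + n) = uu ((1 + n) + s)" by (simp add: add_ac)
    also have "\<dots> = uu (1 + n)" using per[rule_format, of "1 + n"] by simp
    finally show "uu (1 + s + n) = uu (1 + n)" .
  qed
  have "xi (1 + s) = cont_frac (\<lambda>n. uu (1 + s + n)) p (xi (1 + s + p))" by (rule xi_eq_cont_frac)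
  also have "xi (1 + s + p) = xi (1 + s)" using xi_periodic_from_1[OF rp, of "1 + s"] by simp
  finally have f2: "G (xi (1 + s)) = xi (1 + s)" using sh by (simp add: G_def)
  have gt: "xi 1 > 1" "xi (1 + s) > 1" using xi_gt1 by auto
  have r1s: "xi (1 + s) = xi 1"
  proof (rule ccontr)
    assume ne: "xi (1 + s) \<noteq> xi 1"
    have "\<bar>G (xi (1 + s)) - G (xi 1)\<bar> < \<bar>xi (1 + s) - xi 1\<bar>"
      using cont_frac_contraction[OF pos gt(2) gt(1), of p] ne p by (simp add: G_def)
    then show False using f1 f2 by simp
  qed
  show ?thesis using xi_periodic_from_1[OF r1s k] .
qed

lemma B_add_period: "B (j + s) = B s * B j"
proof (induction j)
  case 0 then show ?case by (simp add: B_simps)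
next
  case (Suc j)
  have "B (Suc j + s) = - B (j + s) / xi (Suc j + s)" using B_Suc[of "j + s"] by simp
  also have "xi (Suc j + s) = xi (Suc j)" using xi_add_period[of "Suc j"] by simp
  finally show ?case using Suc B_Suc[of j] by simp
qed

lemma A_add_period: "A (j + s) = A s * A j"
proof -
  have "qconj D (A (j + s)) = qconj D (A s * A j)"
    using B_add_period[of j] qconj_A qconj_mult[OF OK_inK[OF A_OK] OK_inK[OF A_OK]] by simp
  then show ?thesis using qconj_inj OK_inK[OF A_OK] OK_inK[OF OK_mult[OF A_OK A_OK]] by blast
qed

lemma A_mult_B_period: "A s * B s = (-1)^s"
proof -
  have d0: "A 0 * B 1 - A 1 * B 0 = - delta" using A_B_cross_det[of 0] by simp
  have "A (0 + s) * B (Suc 0 + s) - A (Suc 0 + s) * B (0 + s) = - ((-1)^s) * delta"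
    using A_B_cross_det[of s] by simp
  moreover have "A (0 + s) * B (Suc 0 + s) - A (Suc 0 + s) * B (0 + s) =
        (A s * B s) * (A 0 * B 1 - A 1 * B 0)"
    unfolding A_add_period B_add_period by (simp add: algebra_simps)
  ultimately have "- ((-1)^s) * delta = (A s * B s) * (A 0 * B 1 - A 1 * B 0)" by (simp only:)
  then have "- ((-1)^s) * delta = (A s * B s) * (- delta)" by (simp only: d0)
  then have "(A s * B s - (-1)^s) * delta = 0" by (simp only: algebra_simps)
  then have "A s * B s - (-1)^s = 0" using delta_pos by simp
  then show ?thesis by simp
qed

text \<open>\<open>A E\<close> turns out to be \<open>\<epsilon>\<close> (lemma \<open>epsD_eq\<close>).\<close>
definition E :: nat where "E = (if even s then s else 2 * s)"

lemma E_even: "even E" by (simp add: E_def)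
lemma E_pos: "E > 0" using period_pos by (simp add: E_def)

lemma A_E_mult_B_E: "A E * B E = 1"
proof (cases "even s")
  case True then show ?thesis using A_mult_B_period by (simp add: E_def)
next
  case False
  have "A (s + s) * B (s + s) = (A s * B s) * (A s * B s)"
    using A_add_period[of s] B_add_period[of s] by (simp add: algebra_simps)
  then have "A (2*s) * B (2*s) = (A s * B s) * (A s * B s)" by (simp only: mult_2)
  then show ?thesis using False A_mult_B_period by (simp add: E_def)
qed

lemma B_E_pos: "B E > 0" using B_pos_iff_even[of E] E_even by simp

lemma A_E_gt1: "A E > 1" using A_strict_mono[of 0 E] E_pos by (simp add: A_simps)

subsection \<open>Indecomposables and semiconvergents\<close>

definition totpos :: "real \<Rightarrow> bool" where
  "totpos x \<longleftrightarrow> x \<in> OK D \<and> x > 0 \<and> qconj D x > 0"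

definition indecomposable :: "real \<Rightarrow> bool" where
  "indecomposable x \<longleftrightarrow> totpos x \<and> (\<forall>y z. totpos y \<longrightarrow> totpos z \<longrightarrow> x \<noteq> y + z)"

definition Z_basis :: "real \<Rightarrow> real \<Rightarrow> bool" where
  "Z_basis b c \<longleftrightarrow> (\<forall>x\<in>OK D. \<exists>m n::int. x = of_int m * b + of_int n * c)"

definition semiconv :: "nat \<Rightarrow> nat \<Rightarrow> real" where
  "semiconv k t = A (2*k) + real t * A (2*k+1)"

definition conj_ratio :: "real \<Rightarrow> real" where
  "conj_ratio x = qconj D x / x"

lemma alpha_ir_eq_semiconv: "alpha_ir D k t = semiconv k t" by (simp add: alpha_ir_def semiconv_def)

lemma semiconv_OK [intro]: "semiconv k t \<in> OK D"
  unfolding semiconv_def by (intro OK_add OK_mult A_OK OK_of_nat)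

lemma qconj_semiconv: "qconj D (semiconv k t) = B (2*k) + real t * B (2*k+1)"
proof -
  have "qconj D (semiconv k t) = qconj D (A (2*k)) + qconj D (real t * A (2*k+1))"
    unfolding semiconv_def by (rule qconj_add) (auto intro!: OK_inK)
  also have "qconj D (real t * A (2*k+1)) = qconj D (real t) * qconj D (A (2*k+1))"
    by (rule qconj_mult) (auto intro!: OK_inK)
  finally show ?thesis by (simp add: qconj_A)
qed

lemma semiconv_top: "semiconv k (nat (uu (2*k+1))) = A (2*k+2)"
proof -
  have "A (Suc (Suc (2*k))) = of_int (uu (Suc (2*k))) * A (Suc (2*k)) + A (2*k)" by (rule A_simps(3))
  then show ?thesis using uu_pos[of "2*k+1"] by (simp add: semiconv_def)
qed

lemma semiconv_0: "semiconv k 0 = A (2*k)" by (simp add: semiconv_def)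

lemma semiconv_pos: "semiconv k t > 0" unfolding semiconv_def using A_pos[of "2*k"] A_pos[of "2*k+1"] by (simp add: add_pos_nonneg)

lemma semiconv_ge1: "semiconv k t \<ge> 1"
proof -
  have "real t * A (2*k+1) \<ge> 0" using A_pos[of "2*k+1"] by simp
  then show ?thesis unfolding semiconv_def using A_ge1_less_Suc[of "2*k"] by linarith
qed

lemma qconj_semiconv_pos: "t \<le> nat (uu (2*k+1)) \<Longrightarrow> qconj D (semiconv k t) > 0"
proof -
  assume rk: "t \<le> nat (uu (2*k+1))"
  have b0: "B (2*k) > 0" using B_pos_iff_even[of "2*k"] by simp
  have rr: "xi (2*k+1) > real t"
  proof -
    have "real t \<le> of_int (uu (2*k+1))" using rk uu_pos[of "2*k+1"] by linarith
    then show ?thesis using uu_less_xi[of "2*k+1"] by simp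
  qed
  have rpos: "xi (2*k+1) > 0" using xi_gt1[of "2*k+1"] by simp
  have "B (2*k+1) = - B (2*k) / xi (2*k+1)" using B_Suc[of "2*k"] by simp
  then have "qconj D (semiconv k t) = B (2*k) * (1 - real t / xi (2*k+1))"
    unfolding qconj_semiconv by (simp add: algebra_simps)
  moreover have "1 - real t / xi (2*k+1) > 0" using rr rpos by (simp add: divide_less_eq)
  ultimately show ?thesis using b0 by simp
qed

lemma qconj_semiconv_le1: "qconj D (semiconv k t) \<le> 1"
proof -
  have "B (2*k+1) < 0" using B_pos_iff_even[of "2*k+1"] B_nonzero[of "2*k+1"] by auto
  then have "qconj D (semiconv k t) \<le> B (2*k)" unfolding qconj_semiconv by (simp add: mult_nonneg_nonpos)
  also have "\<dots> \<le> 1" using abs_B_le1[of "2*k"] by simp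
  finally show ?thesis .
qed

lemma totpos_semiconv: "t \<le> nat (uu (2*k+1)) \<Longrightarrow> totpos (semiconv k t)"
  unfolding totpos_def using semiconv_OK semiconv_pos qconj_semiconv_pos by blast

lemma Z_basis_of_det:
  assumes "b1 = of_int c1 + of_int q1 * w" "b2 = of_int c2 + of_int q2 * w"
    and det: "c1 * q2 - c2 * q1 = 1 \<or> c1 * q2 - c2 * q1 = -1"
  shows "Z_basis b1 b2"
  unfolding Z_basis_def
proof
  fix x assume "x \<in> OK D"
  then obtain a b where x: "x = of_int a + of_int b * w" by (rule OKE)
  define e where "e = c1 * q2 - c2 * q1"
  have e2: "e * e = 1" using det by (auto simp: e_def)
  define m where "m = e * (a * q2 - b * c2)"
  define n where "n = e * (b * c1 - a * q1)"
  have "m * c1 + n * c2 = a * (e * e)" unfolding m_def n_def e_def by (simp add: algebra_simps)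
  then have h1: "m * c1 + n * c2 = a" using e2 by simp
  have "m * q1 + n * q2 = b * (e * e)" unfolding m_def n_def e_def by (simp add: algebra_simps)
  then have h2: "m * q1 + n * q2 = b" using e2 by simp
  have "of_int m * b1 + of_int n * b2 = of_int (m * c1 + n * c2) + of_int (m * q1 + n * q2) * w"
    unfolding assms(1,2) by (simp add: algebra_simps)
  then show "\<exists>m n. x = of_int m * b1 + of_int n * b2" using h1 h2 x by metis
qed

lemma Z_basis_A: "Z_basis (A j) (A (Suc j))"
proof (rule Z_basis_of_det)
  show "A j = of_int (PP j - QQ j * trace_w) + of_int (QQ j) * w" by (simp add: A_def' w'_eq algebra_simps)
  show "A (Suc j) = of_int (PP (Suc j) - QQ (Suc j) * trace_w) + of_int (QQ (Suc j)) * w" by (simp add: A_def' w'_eq algebra_simps)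
  have "(PP j - QQ j * trace_w) * QQ (Suc j) - (PP (Suc j) - QQ (Suc j) * trace_w) * QQ j = QQ (Suc j) * PP j - PP (Suc j) * QQ j"
    by (simp add: algebra_simps)
  also have "\<dots> = (-1)^j" by (rule convergent_det)
  finally show "(PP j - QQ j * trace_w) * QQ (Suc j) - (PP (Suc j) - QQ (Suc j) * trace_w) * QQ j = 1 \<or>
      (PP j - QQ j * trace_w) * QQ (Suc j) - (PP (Suc j) - QQ (Suc j) * trace_w) * QQ j = -1"
    by (cases "even j") auto
qed

lemma Z_basis_change:
  assumes "Z_basis b c" "b = of_int i1 * b' + of_int j1 * c'" "c = of_int i2 * b' + of_int j2 * c'"
  shows "Z_basis b' c'"
  unfolding Z_basis_def
proof
  fix x assume "x \<in> OK D"
  then obtain m n where "x = of_int m * b + of_int n * c" using assms(1) unfolding Z_basis_def by blast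
  then have "x = of_int (m * i1 + n * i2) * b' + of_int (m * j1 + n * j2) * c'"
    unfolding assms(2,3) by (simp add: algebra_simps)
  then show "\<exists>m n. x = of_int m * b' + of_int n * c'" by blast
qed

lemma Z_basis_semiconv: "Z_basis (semiconv k t) (semiconv k (Suc t))"
proof (rule Z_basis_change[OF Z_basis_A[of "2*k"]])
  show "A (2*k) = of_int (int t + 1) * semiconv k t + of_int (- int t) * semiconv k (Suc t)"
    by (simp add: semiconv_def algebra_simps)
  show "A (Suc (2*k)) = of_int (-1) * semiconv k t + of_int 1 * semiconv k (Suc t)"
    by (simp add: semiconv_def algebra_simps)
qed

lemma Z_basis_semiconv_A: "Z_basis (semiconv k t) (A (2*k+1))"
proof (rule Z_basis_change[OF Z_basis_A[of "2*k"]])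
  show "A (2*k) = of_int 1 * semiconv k t + of_int (- int t) * A (2*k+1)"
    by (simp add: semiconv_def algebra_simps)
  show "A (Suc (2*k)) = of_int 0 * semiconv k t + of_int 1 * A (2*k+1)"
    by simp
qed

lemma Z_basis_qconj:
  assumes "Z_basis b c" "b \<in> OK D" "c \<in> OK D"
  shows "Z_basis (qconj D b) (qconj D c)"
  unfolding Z_basis_def
proof
  fix x assume x: "x \<in> OK D"
  then have "qconj D x \<in> OK D" by (rule qconj_OK)
  then obtain m n where mn: "qconj D x = of_int m * b + of_int n * c" using assms(1) unfolding Z_basis_def by blast
  have kb: "inK b" "inK c" "inK x" using assms x by (auto intro: OK_inK)
  have "x = qconj D (of_int m * b + of_int n * c)" using mn kb by (metis qconj_qconj)
  also have "\<dots> = of_int m * qconj D b + of_int n * qconj D c"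
    using kb by (simp add: qconj_add qconj_mult inK_mult inK_of_int)
  finally show "\<exists>m n. x = of_int m * qconj D b + of_int n * qconj D c" by blast
qed

lemma nat_combination_of_Z_basis:
  assumes sp: "Z_basis b c" and bc: "b \<in> OK D" "c \<in> OK D" "b > 0" "c > 0"
    and x: "totpos x" and r1: "conj_ratio b \<ge> conj_ratio x" and r2: "conj_ratio x \<ge> conj_ratio c" and r3: "conj_ratio b > conj_ratio c"
  shows "\<exists>m n::nat. x = real m * b + real n * c"
proof -
  obtain m n where mn: "x = of_int m * b + of_int n * c" using sp x unfolding Z_basis_def totpos_def by blast
  have kb: "inK b" "inK c" using bc by (auto intro: OK_inK)
  have "qconj D (of_int m * b + of_int n * c) = of_int m * qconj D b + of_int n * qconj D c"
    using kb by (simp add: qconj_add qconj_mult inK_mult inK_of_int)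
  then have xc: "qconj D x = of_int m * qconj D b + of_int n * qconj D c" using mn by simp
  have xp: "x > 0" using x by (simp add: totpos_def)
  have "qconj D x * b - x * qconj D b = (of_int m * qconj D b + of_int n * qconj D c) * b - (of_int m * b + of_int n * c) * qconj D b"
    by (simp only: xc[symmetric] mn[symmetric])
  also have "\<dots> = of_int n * (qconj D c * b - c * qconj D b)" by (simp add: algebra_simps)
  finally have "qconj D x * b - x * qconj D b = of_int n * (qconj D c * b - c * qconj D b)" .
  moreover have "qconj D x * b - x * qconj D b = x * b * (conj_ratio x - conj_ratio b)"
    using xp bc by (simp add: conj_ratio_def field_simps)
  moreover have "qconj D c * b - c * qconj D b = c * b * (conj_ratio c - conj_ratio b)"
    using bc by (simp add: conj_ratio_def field_simps)
  ultimately have e1: "x * b * (conj_ratio x - conj_ratio b) = of_int n * (c * b * (conj_ratio c - conj_ratio b))" by simp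
  have "x * b * (conj_ratio x - conj_ratio b) \<le> 0" using xp bc r1 by (simp add: mult_nonneg_nonpos)
  moreover have "c * b * (conj_ratio c - conj_ratio b) < 0" using bc r3 by (simp add: mult_pos_neg)
  ultimately have n0: "n \<ge> 0" using e1 by (smt (verit) mult_neg_neg of_int_less_0_iff)
  have "qconj D x * c - x * qconj D c = (of_int m * qconj D b + of_int n * qconj D c) * c - (of_int m * b + of_int n * c) * qconj D c"
    by (simp only: xc[symmetric] mn[symmetric])
  also have "\<dots> = of_int m * (qconj D b * c - b * qconj D c)" by (simp add: algebra_simps)
  finally have "qconj D x * c - x * qconj D c = of_int m * (qconj D b * c - b * qconj D c)" .
  moreover have "qconj D x * c - x * qconj D c = x * c * (conj_ratio x - conj_ratio c)"
    using xp bc by (simp add: conj_ratio_def field_simps)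
  moreover have "qconj D b * c - b * qconj D c = b * c * (conj_ratio b - conj_ratio c)"
    using bc by (simp add: conj_ratio_def field_simps)
  ultimately have e2: "x * c * (conj_ratio x - conj_ratio c) = of_int m * (b * c * (conj_ratio b - conj_ratio c))" by simp
  have "x * c * (conj_ratio x - conj_ratio c) \<ge> 0" using xp bc r2 by simp
  moreover have "b * c * (conj_ratio b - conj_ratio c) > 0" using bc r3 by simp
  ultimately have m0: "m \<ge> 0" using e2 by (smt (verit) mult_neg_pos of_int_less_0_iff)
  have "x = real (nat m) * b + real (nat n) * c" using mn m0 n0 by simp
  then show ?thesis by blast
qed

lemma qconj_lin: "b \<in> OK D \<Longrightarrow> c \<in> OK D \<Longrightarrow> qconj D (of_int m * b + of_int n * c) = of_int m * qconj D b + of_int n * qconj D c"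
  by (simp add: qconj_add qconj_mult inK_mult inK_of_int OK_inK)

lemma totpos_qconj: "totpos x \<Longrightarrow> totpos (qconj D x)"
  unfolding totpos_def using qconj_qconj[OF OK_inK] qconj_OK by auto

lemma totpos_add: "totpos x \<Longrightarrow> totpos y \<Longrightarrow> totpos (x + y)"
  unfolding totpos_def by (auto simp: qconj_add OK_inK)

lemma totpos_nat_mult: "totpos x \<Longrightarrow> n \<ge> 1 \<Longrightarrow> totpos (real n * x)"
proof -
  assume "totpos x" "n \<ge> 1"
  moreover have "qconj D (real n * x) = real n * qconj D x"
    using calculation by (simp add: qconj_mult totpos_def OK_inK inK_of_nat)
  ultimately show ?thesis unfolding totpos_def using OK_mult[OF OK_of_nat] by auto
qed

lemma indecomposable_qconj: "indecomposable x \<Longrightarrow> indecomposable (qconj D x)"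
proof -
  assume ix: "indecomposable x"
  then have tx: "totpos x" by (simp add: indecomposable_def)
  show ?thesis unfolding indecomposable_def
  proof (intro conjI allI impI)
    show "totpos (qconj D x)" using tx by (rule totpos_qconj)
    fix y z assume "totpos y" "totpos z"
    show "qconj D x \<noteq> y + z"
    proof
      assume "qconj D x = y + z"
      then have "x = qconj D y + qconj D z" using tx \<open>totpos y\<close> \<open>totpos z\<close>
        by (metis qconj_add qconj_qconj OK_inK totpos_def)
      then show False using ix totpos_qconj[OF \<open>totpos y\<close>] totpos_qconj[OF \<open>totpos z\<close>] unfolding indecomposable_def by blast
    qed
  qed
qed

text \<open>A decomposition \<open>b = y + z\<close> writes \<open>y\<close> and \<open>z\<close> in the basis \<open>b, g\<close>; since \<open>g\<close> and its
  conjugate have opposite signs, one of the two summands has a non-positive conjugate.\<close>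
lemma indecomposable_if_Z_basis:
  assumes sp: "Z_basis b g" and tb: "totpos b"
    and gO: "g \<in> OK D" and gpos: "g > 0" and gneg: "qconj D g < 0"
  shows "indecomposable b"
proof -
  have bpos: "b > 0" "qconj D b > 0" and bO: "b \<in> OK D" using tb by (auto simp: totpos_def)
  show ?thesis unfolding indecomposable_def
  proof (intro conjI allI impI tb)
    fix y z assume ty: "totpos y" and tz: "totpos z"
    show "b \<noteq> y + z"
    proof
      assume byz: "b = y + z"
      obtain m n where mn: "y = of_int m * b + of_int n * g" using sp ty unfolding Z_basis_def totpos_def by blast
      have zmn: "z = of_int (1 - m) * b + of_int (- n) * g" using byz mn by (simp add: algebra_simps)
      have yc: "qconj D y = of_int m * qconj D b + of_int n * qconj D g" by (simp only: mn qconj_lin[OF bO gO])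
      have zc: "qconj D z = of_int (1 - m) * qconj D b + of_int (- n) * qconj D g" by (simp only: zmn qconj_lin[OF bO gO])
      have yp: "y > 0" "qconj D y > 0" and zp: "z > 0" "qconj D z > 0" using ty tz by (auto simp: totpos_def)
      show False
      proof (cases "n = 0")
        case True
        then have "of_int m * b > 0" "of_int (1 - m) * b > 0" using yp zp mn zmn by auto
        then have "m > 0" "1 - m > 0" using bpos by (auto simp: zero_less_mult_iff)
        then show False by simp
      next
        case False
        show False
        proof (cases "n > 0")
          case True
          have "of_int (1 - m) * b > of_int n * g" using zp zmn by simp
          moreover have "of_int n * g > 0" using True gpos by simp
          ultimately have "of_int (1 - m) * b > 0" by simp
          then have "m \<le> 0" using bpos by (simp add: zero_less_mult_iff)
          then have "of_int m * qconj D b \<le> 0" using bpos by (simp add: mult_nonpos_nonneg)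
          moreover have "of_int n * qconj D g < 0" using True gneg by (simp add: mult_pos_neg)
          ultimately show False using yp yc by simp
        next
          case False
          then have nn: "n < 0" using \<open>n \<noteq> 0\<close> by simp
          have "of_int m * b > - of_int n * g" using yp mn by simp
          moreover have "of_int n * g < 0" using mult_neg_pos[of "of_int n" g] nn gpos by simp
          then have "- of_int n * g > 0" by simp
          ultimately have "of_int m * b > 0" by simp
          then have "m \<ge> 1" using bpos by (simp add: zero_less_mult_iff)
          then have "of_int (1 - m) * qconj D b \<le> 0" using bpos by (simp add: mult_nonpos_nonneg)
          moreover have "of_int (- n) * qconj D g < 0" using mult_neg_neg[of "of_int n" "qconj D g"] nn gneg by simp
          ultimately show False using zp zc by simp
        qed
      qed
    qed
  qed
qed

lemma indecomposable_semiconv: "t \<le> nat (uu (2*k+1)) \<Longrightarrow> indecomposable (semiconv k t)"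
  using B_pos_iff_even[of "2*k+1"] B_nonzero[of "2*k+1"]
  by (intro indecomposable_if_Z_basis[OF Z_basis_semiconv_A totpos_semiconv A_OK A_pos])
    (auto simp: qconj_A)

definition totpos_unit :: "real \<Rightarrow> bool" where
  "totpos_unit x \<longleftrightarrow> totpos x \<and> (\<exists>v\<in>OK D. x * v = 1)"

lemma totpos_unit_norm: "totpos_unit x \<Longrightarrow> x * qconj D x = 1"
proof -
  assume tu: "totpos_unit x"
  then obtain v where v: "v \<in> OK D" "x * v = 1" by (auto simp: totpos_unit_def)
  have xO: "x \<in> OK D" "x > 0" "qconj D x > 0" using tu by (auto simp: totpos_unit_def totpos_def)
  obtain a where a: "x * qconj D x = of_int a" using mult_qconj_Ints[OF xO(1)] Ints_cases by blast
  obtain b where b: "v * qconj D v = of_int b" using mult_qconj_Ints[OF v(1)] Ints_cases by blast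
  have "qconj D (x * v) = qconj D x * qconj D v" by (rule qconj_mult[OF OK_inK[OF xO(1)] OK_inK[OF v(1)]])
  then have q1: "qconj D x * qconj D v = 1" using v(2) by simp
  have "(x * qconj D x) * (v * qconj D v) = (x * v) * (qconj D x * qconj D v)" by (simp add: algebra_simps)
  then have "(x * qconj D x) * (v * qconj D v) = 1" using q1 v by simp
  then have "of_int (a * b) = (1::real)" using a b by simp
  then have ab: "a * b = 1" by (simp only: of_int_eq_1_iff)
  have "x * qconj D x > 0" using xO by simp
  then have "a > 0" using a by simp
  then have "a = 1" using ab pos_zmult_eq_1_iff by blast
  then show ?thesis using a by simp
qed

lemma indecomposable_totpos_unit: "totpos_unit x \<Longrightarrow> indecomposable x"
proof -
  assume tu: "totpos_unit x"
  have nx: "x * qconj D x = 1" by (rule totpos_unit_norm[OF tu])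
  show ?thesis unfolding indecomposable_def
  proof (intro conjI allI impI)
    show "totpos x" using tu by (simp add: totpos_unit_def)
    fix y z assume ty: "totpos y" and tz: "totpos z"
    show "x \<noteq> y + z"
    proof
      assume xyz: "x = y + z"
      have ge1: "y * qconj D y \<ge> 1" if "totpos y" for y
      proof -
        have "y \<in> OK D" using that by (simp add: totpos_def)
        then obtain a where a: "y * qconj D y = of_int a" using mult_qconj_Ints Ints_cases by blast
        have "y * qconj D y > 0" using that by (simp add: totpos_def)
        then have "a \<ge> 1" using a by simp
        then show ?thesis using a by simp
      qed
      have yO: "y \<in> OK D" "z \<in> OK D" using ty tz by (auto simp: totpos_def)
      have "qconj D x = qconj D y + qconj D z" unfolding xyz by (rule qconj_add[OF OK_inK[OF yO(1)] OK_inK[OF yO(2)]])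
      then have "x * qconj D x = (y + z) * (qconj D y + qconj D z)" using xyz by simp
      then have "x * qconj D x = y * qconj D y + z * qconj D z + (y * qconj D z + z * qconj D y)"
        by (simp add: algebra_simps)
      moreover have "y * qconj D z + z * qconj D y > 0" using ty tz by (simp add: totpos_def add_pos_pos)
      ultimately have "x * qconj D x > 2" using ge1[OF ty] ge1[OF tz] by simp
      then show False using nx by simp
    qed
  qed
qed

lemma totpos_unit_qconj: "totpos_unit x \<Longrightarrow> totpos_unit (qconj D x) \<and> x * qconj D x = 1"
proof -
  assume tu: "totpos_unit x"
  have nx: "x * qconj D x = 1" by (rule totpos_unit_norm[OF tu])
  have "totpos (qconj D x)" using tu totpos_qconj by (simp add: totpos_unit_def)
  moreover have "x \<in> OK D" using tu by (simp add: totpos_unit_def totpos_def)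
  moreover have "qconj D x * x = 1" using nx by (simp add: mult.commute)
  ultimately show ?thesis using nx unfolding totpos_unit_def by blast
qed

lemma indecomposable_mult_totpos_unit: "indecomposable x \<Longrightarrow> totpos_unit e \<Longrightarrow> indecomposable (e * x)"
proof -
  assume ix: "indecomposable x" and te: "totpos_unit e"
  have ne: "e * qconj D e = 1" by (rule totpos_unit_norm[OF te])
  have tx: "totpos x" using ix by (simp add: indecomposable_def)
  have eO: "e \<in> OK D" "e > 0" "qconj D e > 0" using te by (auto simp: totpos_unit_def totpos_def)
  have e'O: "qconj D e \<in> OK D" using eO(1) by (rule qconj_OK)
  have xO: "x \<in> OK D" "x > 0" "qconj D x > 0" using tx by (auto simp: totpos_def)
  have "qconj D (e * x) = qconj D e * qconj D x" by (rule qconj_mult[OF OK_inK[OF eO(1)] OK_inK[OF xO(1)]])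
  then have tex: "totpos (e * x)" using eO xO unfolding totpos_def by (simp add: OK_mult)
  have tp_mult: "totpos (qconj D e * y)" if ty: "totpos y" for y
  proof -
    have yO: "y \<in> OK D" "y > 0" "qconj D y > 0" using ty by (auto simp: totpos_def)
    have "qconj D (qconj D e * y) = qconj D (qconj D e) * qconj D y" by (rule qconj_mult[OF OK_inK[OF e'O] OK_inK[OF yO(1)]])
    also have "qconj D (qconj D e) = e" using eO by (simp add: OK_inK)
    finally show ?thesis using eO e'O yO unfolding totpos_def by (simp add: OK_mult)
  qed
  show ?thesis unfolding indecomposable_def
  proof (intro conjI allI impI tex)
    fix y z assume ty: "totpos y" and tz: "totpos z"
    show "e * x \<noteq> y + z"
    proof
      assume "e * x = y + z"
      then have "qconj D e * (e * x) = qconj D e * y + qconj D e * z" by (simp add: algebra_simps)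
      moreover have "qconj D e * (e * x) = x" using ne by (simp add: mult.assoc[symmetric] mult.commute[of "qconj D e"])
      ultimately have "x = qconj D e * y + qconj D e * z" by simp
      then show False using ix tp_mult[OF ty] tp_mult[OF tz] unfolding indecomposable_def by blast
    qed
  qed
qed

lemma conj_ratio_A0: "conj_ratio (A 0) = 1" by (simp add: conj_ratio_def qconj_A A_simps B_simps)

lemma conj_ratio_A_even: "conj_ratio (A (2*k)) \<le> (1/2)^k"
proof -
  have "conj_ratio (A (2*k)) = B (2*k) / A (2*k)" by (simp add: conj_ratio_def qconj_A)
  also have "\<dots> \<le> B (2*k)" using A_ge1_less_Suc[of "2*k"] B_pos_iff_even[of "2*k"] by (simp add: divide_le_eq mult_le_cancel_left1)
  also have "\<dots> \<le> (1/2)^k" using abs_B_even_le_power[of k] by simp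
  finally show ?thesis .
qed

text \<open>Totally positive elements are ordered by \<open>conj_ratio x = x'/x\<close>; a cone pair spans
  every totally positive element whose ratio lies between theirs.\<close>
definition cone_pair :: "real \<Rightarrow> real \<Rightarrow> bool" where
  "cone_pair b c \<longleftrightarrow> Z_basis b c \<and> indecomposable b \<and> indecomposable c \<and> conj_ratio b > conj_ratio c"

lemma conj_ratio_qconj: "totpos x \<Longrightarrow> conj_ratio (qconj D x) = 1 / conj_ratio x"
  unfolding conj_ratio_def totpos_def by (simp add: qconj_qconj OK_inK)

lemma cone_pair_qconj: "cone_pair b c \<Longrightarrow> cone_pair (qconj D c) (qconj D b)"
proof -
  assume g: "cone_pair b c"
  then have ib: "indecomposable b" "indecomposable c" and sp: "Z_basis b c" and rr: "conj_ratio b > conj_ratio c" by (auto simp: cone_pair_def)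
  have tb: "totpos b" "totpos c" using ib by (auto simp: indecomposable_def)
  have "conj_ratio c > 0" "conj_ratio b > 0" using tb by (auto simp: conj_ratio_def totpos_def)
  then have "conj_ratio (qconj D c) > conj_ratio (qconj D b)" using conj_ratio_qconj[OF tb(1)] conj_ratio_qconj[OF tb(2)] rr by (simp add: frac_less2)
  moreover have "Z_basis (qconj D c) (qconj D b)"
  proof -
    have "Z_basis (qconj D b) (qconj D c)" using Z_basis_qconj[OF sp] tb by (simp add: totpos_def)
    then show ?thesis unfolding Z_basis_def by (metis add.commute)
  qed
  ultimately show ?thesis using indecomposable_qconj ib by (simp add: cone_pair_def)
qed

lemma cone_pair_nat_combination:
  assumes g: "cone_pair b c" and x: "totpos x" "conj_ratio b \<ge> conj_ratio x" "conj_ratio x \<ge> conj_ratio c"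
  shows "\<exists>m n::nat. x = real m * b + real n * c"
proof -
  have ib: "indecomposable b" "indecomposable c" and sp: "Z_basis b c" and rr: "conj_ratio b > conj_ratio c" using g by (auto simp: cone_pair_def)
  have tb: "totpos b" "totpos c" using ib by (auto simp: indecomposable_def)
  show ?thesis using nat_combination_of_Z_basis[OF sp _ _ _ _ x rr] tb by (auto simp: totpos_def)
qed

lemma totpos_nat_combination:
  assumes b: "totpos b" and c: "totpos c" and "m + n \<noteq> 0"
  shows "totpos (real m * b + real n * c)"
proof (cases "m = 0")
  case True then show ?thesis using assms totpos_nat_mult[OF c, of n] by simp
next
  case False
  show ?thesis
  proof (cases "n = 0")
    case True then show ?thesis using \<open>m \<noteq> 0\<close> totpos_nat_mult[OF b, of m] by simp
  next
    case False
    then show ?thesis using \<open>m \<noteq> 0\<close> totpos_add[OF totpos_nat_mult[OF b] totpos_nat_mult[OF c]] by simp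
  qed
qed

lemma indecomposable_nat_combination:
  assumes x: "indecomposable x" and b: "totpos b" and c: "totpos c"
    and mn: "x = real m * b + real n * c"
  shows "x = b \<or> x = c"
proof (cases "m = 0")
  case True
  then have x_eq: "x = real n * c" using mn by simp
  have "x > 0" using x by (simp add: indecomposable_def totpos_def)
  then have "n \<noteq> 0" using x_eq by (metis mult_eq_0_iff of_nat_0 less_irrefl)
  moreover have "n \<le> 1"
  proof (rule ccontr)
    assume "\<not> n \<le> 1"
    then have "x = c + real (n - 1) * c" using x_eq by (simp add: algebra_simps of_nat_diff)
    moreover have "totpos (real (n - 1) * c)"
      by (rule totpos_nat_mult[OF c]) (use \<open>\<not> n \<le> 1\<close> in simp)
    ultimately show False using x c by (auto simp: indecomposable_def)
  qed
  ultimately show ?thesis using x_eq by simp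
next
  case False
  then have x_eq: "x = b + (real (m - 1) * b + real n * c)"
    using mn by (simp add: algebra_simps of_nat_diff)
  have "m - 1 + n = 0"
  proof (rule ccontr)
    assume "m - 1 + n \<noteq> 0"
    then have "totpos (real (m - 1) * b + real n * c)" by (rule totpos_nat_combination[OF b c])
    then show False using x b x_eq by (auto simp: indecomposable_def)
  qed
  then show ?thesis using x_eq by simp
qed

lemma cone_pair_indecomposable:
  assumes bc: "cone_pair b c" and x: "indecomposable x"
    and "conj_ratio b \<ge> conj_ratio x" "conj_ratio x \<ge> conj_ratio c"
  shows "x = b \<or> x = c"
proof -
  have "totpos b" "totpos c" "totpos x" using bc x by (auto simp: cone_pair_def indecomposable_def)
  moreover obtain m n :: nat where "x = real m * b + real n * c"
    using cone_pair_nat_combination[OF bc \<open>totpos x\<close> assms(3,4)] by blast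
  ultimately show ?thesis using indecomposable_nat_combination[OF x] by blast
qed

definition is_semiconv :: "real \<Rightarrow> bool" where
  "is_semiconv y \<longleftrightarrow> (\<exists>k t. int t < uu (2*k+1) \<and> y = semiconv k t)"

lemma is_semiconv_semiconv: "t \<le> nat (uu (2*k+1)) \<Longrightarrow> is_semiconv (semiconv k t)"
proof (cases "t = nat (uu (2*k+1))")
  case True
  then have "semiconv k t = semiconv (Suc k) 0" using semiconv_top[of k] by (simp add: semiconv_0)
  moreover have "int 0 < uu (2 * Suc k + 1)" using uu_pos[of "2 * Suc k + 1"] by simp
  ultimately show ?thesis unfolding is_semiconv_def by blast
next
  case False
  assume "t \<le> nat (uu (2*k+1))"
  then have "int t < uu (2*k+1)" using False by linarith
  then show ?thesis unfolding is_semiconv_def by blast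
qed

lemma indecomposable_if_is_semiconv: "is_semiconv y \<Longrightarrow> indecomposable y"
  unfolding is_semiconv_def using indecomposable_semiconv by (auto simp: nat_less_iff less_imp_le)

lemma cone_pair_around_ge_qconj:
  assumes x: "totpos x" "x \<ge> qconj D x"
  shows "\<exists>b c. cone_pair b c \<and> is_semiconv b \<and> is_semiconv c \<and>
    conj_ratio b \<ge> conj_ratio x \<and> conj_ratio x \<ge> conj_ratio c"
proof -
  define \<rho> where "\<rho> = conj_ratio x"
  have "x > 0" "qconj D x > 0" using x by (auto simp: totpos_def)
  then have \<rho>: "\<rho> > 0" "\<rho> \<le> 1" using x(2) by (auto simp: \<rho>_def conj_ratio_def divide_le_eq)
  obtain n where "(1/2::real)^n < \<rho>" using real_arch_pow_inv[OF \<rho>(1), of "1/2"] by auto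
  then have "\<exists>k. conj_ratio (A (2*k)) < \<rho>" using conj_ratio_A_even[of n] by (meson le_less_trans)
  then obtain k where k: "\<not> conj_ratio (A (2*k)) < \<rho>" "conj_ratio (A (2 * Suc k)) < \<rho>"
    using exists_least_lemma[where P = "\<lambda>k. conj_ratio (A (2*k)) < \<rho>"] conj_ratio_A0 \<rho> by auto
  define U where "U = nat (uu (2*k+1))"
  have top: "semiconv k U = A (2 * Suc k)" using semiconv_top[of k] by (simp add: U_def)
  have "U > 0" using uu_pos[of "2*k+1"] by (simp add: U_def)
  then obtain t where t: "\<not> (conj_ratio (semiconv k t) < \<rho> \<or> U \<le> t)"
    "conj_ratio (semiconv k (Suc t)) < \<rho> \<or> U \<le> Suc t"
    using exists_least_lemma[where P = "\<lambda>t. conj_ratio (semiconv k t) < \<rho> \<or> U \<le> t"] k(1)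
    by (auto simp: semiconv_0)
  then have tU: "Suc t \<le> U" and t1: "conj_ratio (semiconv k t) \<ge> \<rho>" by auto
  have t2: "conj_ratio (semiconv k (Suc t)) < \<rho>"
  proof (cases "U \<le> Suc t")
    case True then show ?thesis using tU top k(2) by (metis le_antisym)
  next
    case False then show ?thesis using t(2) by simp
  qed
  have "cone_pair (semiconv k t) (semiconv k (Suc t))"
    unfolding cone_pair_def using Z_basis_semiconv indecomposable_semiconv tU t1 t2
    by (auto simp: U_def)
  moreover have "is_semiconv (semiconv k t)" "is_semiconv (semiconv k (Suc t))"
    using is_semiconv_semiconv tU by (auto simp: U_def)
  ultimately show ?thesis using t1 t2 unfolding \<rho>_def
    by (intro exI[of _ "semiconv k t"] exI[of _ "semiconv k (Suc t)"]) auto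
qed

lemma cone_pair_around:
  assumes x: "totpos x"
  shows "\<exists>b c. cone_pair b c \<and> (is_semiconv b \<or> is_semiconv (qconj D b)) \<and> (is_semiconv c \<or> is_semiconv (qconj D c)) \<and> conj_ratio b \<ge> conj_ratio x \<and> conj_ratio x \<ge> conj_ratio c"
proof (cases "x \<ge> qconj D x")
  case True then show ?thesis using cone_pair_around_ge_qconj[OF x True] by blast
next
  case False
  have tx': "totpos (qconj D x)" by (rule totpos_qconj[OF x])
  have xx: "qconj D (qconj D x) = x" using x by (simp add: totpos_def OK_inK)
  obtain b c where bc: "cone_pair b c" "is_semiconv b" "is_semiconv c" "conj_ratio b \<ge> conj_ratio (qconj D x)" "conj_ratio (qconj D x) \<ge> conj_ratio c"
    using cone_pair_around_ge_qconj[OF tx'] False xx by auto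
  have tb: "totpos b" "totpos c" using bc(1) by (auto simp: cone_pair_def indecomposable_def)
  have "conj_ratio b > 0" "conj_ratio c > 0" "conj_ratio x > 0" using tb x by (auto simp: conj_ratio_def totpos_def)
  then have pos: "conj_ratio b > 0" "conj_ratio c > 0" "conj_ratio x > 0" by auto
  have "conj_ratio b \<ge> 1 / conj_ratio x" using bc(4) conj_ratio_qconj[OF x] by simp
  then have "conj_ratio b * conj_ratio x \<ge> 1" using pos by (simp add: divide_le_eq)
  then have r1a: "conj_ratio (qconj D b) \<le> conj_ratio x" using conj_ratio_qconj[OF tb(1)] pos by (simp add: divide_le_eq mult.commute)
  have "1 / conj_ratio x \<ge> conj_ratio c" using bc(5) conj_ratio_qconj[OF x] by simp
  then have "conj_ratio c * conj_ratio x \<le> 1" using pos by (simp add: le_divide_eq)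
  then have r1b: "conj_ratio x \<le> conj_ratio (qconj D c)" using conj_ratio_qconj[OF tb(2)] pos by (simp add: le_divide_eq mult.commute)
  note r1 = r1a r1b
  have "is_semiconv (qconj D (qconj D b))" "is_semiconv (qconj D (qconj D c))" using bc tb by (simp_all add: totpos_def OK_inK)
  then show ?thesis using cone_pair_qconj[OF bc(1)] r1 by blast
qed

subsection \<open>The fundamental unit\<close>

lemma B_mult_A_Suc_coords: "\<exists>c. B j * A (Suc j) = of_int c + (-1)^j * w"
proof -
  define P' where "P' = PP j"
  define Q' where "Q' = QQ j"
  define P where "P = PP (Suc j)"
  define Q where "Q = QQ (Suc j)"
  have "B j * A (Suc j) = (of_int P' - of_int Q' * w) * (of_int (P - Q * trace_w) + of_int Q * w)"
    by (simp add: B_def A_def' w'_eq P'_def Q'_def P_def Q_def algebra_simps)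
  also have "\<dots> = of_int (P' * (P - Q * trace_w)) + of_int (P' * Q - Q' * (P - Q * trace_w)) * w - of_int (Q' * Q) * (w * w)"
    by (simp add: algebra_simps)
  also have "\<dots> = of_int (P' * (P - Q * trace_w) + Q' * Q * norm_w) + of_int (P' * Q - Q' * P) * w"
    unfolding w_sq by (simp add: algebra_simps)
  also have "P' * Q - Q' * P = (-1)^j" using convergent_det[of j] by (simp add: P'_def Q'_def P_def Q_def algebra_simps)
  finally have "B j * A (Suc j) = of_int (P' * (P - Q * trace_w) + Q' * Q * norm_w) + (-1)^j * w" by simp
  then show ?thesis by blast
qed

lemma frac_w_minus: "frac (w - of_int c) = frac w"
  using frac_add_of_int_right[of w "- c"] by simp

lemma xi_1: "xi 1 = 1 / frac w" using xi_Suc[of 0] by simp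

lemma is_period_if_A_unit: "even j \<Longrightarrow> j \<ge> 1 \<Longrightarrow> A j * B j = 1 \<Longrightarrow> is_period j"
proof -
  assume j: "even j" "j \<ge> 1" and u: "A j * B j = 1"
  obtain m where jm: "j = Suc m" using j by (cases j) auto
  obtain c where c: "B m * A (Suc m) = of_int c + (-1)^m * w" using B_mult_A_Suc_coords by blast
  have om: "odd m" using j jm by simp
  have "xi j = - (B (j-1) * A j) / (A j * B j)" by (rule xi_eq_A_B[OF j(2)])
  then have "xi j = w - of_int c" using u c om jm by simp
  then have "xi (Suc j) = xi 1" using xi_Suc[of j] xi_1 frac_w_minus by simp
  then show "is_period j" using is_period_if_xi_repeats[of j] j by simp
qed

text \<open>A unit \<open>\<alpha>\<^sub>2\<^sub>k\<^sub>-\<^sub>1\<^sub>,\<^sub>t\<close> with \<open>t \<ge> 1\<close> would give \<open>\<xi>\<^sub>2\<^sub>k\<^sub>+\<^sub>1 = \<xi>\<^sub>1 + t\<close>, impossible because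
  the conjugates of all complete quotients \<open>\<xi>\<^sub>k\<close>, \<open>k \<ge> 1\<close>, lie in \<open>(-1, 0)\<close>.\<close>
lemma semiconv_not_unit:
  assumes t: "t \<ge> 1" "int t < uu (2*k+1)" and u: "semiconv k t * qconj D (semiconv k t) = 1"
  shows False
proof -
  define j where "j = 2*k"
  have tj: "int t < uu (Suc j)" using t by (simp add: j_def)
  define \<eta> where "\<eta> = semiconv k t"
  have eta: "\<eta> = A j + real t * A (Suc j)" by (simp add: \<eta>_def semiconv_def j_def)
  have eta': "qconj D \<eta> = B j + real t * B (Suc j)" by (simp add: \<eta>_def qconj_semiconv j_def)
  have rp: "xi (Suc j) > 0" using xi_gt1[of "Suc j"] by simp
  have Bj: "B j = - xi (Suc j) * B (Suc j)" using B_Suc[of j] rp by (simp add: field_simps)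
  define \<rho> where "\<rho> = xi (Suc j) - real t"
  have rho1: "\<rho> > 1"
  proof -
    have "real t + 1 \<le> of_int (uu (Suc j))" using tj by linarith
    then show ?thesis using uu_less_xi[of "Suc j"] by (simp add: \<rho>_def)
  qed
  have eq1: "qconj D \<eta> = - B (Suc j) * \<rho>" using eta' Bj by (simp add: \<rho>_def algebra_simps)
  have etap: "\<eta> > 0" using semiconv_pos by (simp add: \<eta>_def)
  have "\<eta> * (- B (Suc j) * \<rho>) = 1" using u eq1 by (simp add: \<eta>_def)
  then have inv: "1 / \<rho> = - B (Suc j) * \<eta>" using rho1 by (simp add: field_simps)
  obtain c where c: "B j * A (Suc j) = of_int c + (-1)^j * w" using B_mult_A_Suc_coords by blast
  have ej: "even j" by (simp add: j_def)
  have "qconj D (B j * A (Suc j)) = A j * B (Suc j)" by (rule qconj_cross)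
  moreover have "qconj D (of_int c + w) = of_int c + w'"
    using qconj_OK_coords[of c 1] by simp
  ultimately have BA: "B (Suc j) * A j = of_int c + of_int trace_w - w" using c ej by (simp add: w'_eq mult.commute)
  obtain n where n: "A (Suc j) * B (Suc j) = of_int n" using A_mult_B_Ints[of "Suc j"] Ints_cases by blast
  have "1 / \<rho> = - (B (Suc j) * A j) - real t * (A (Suc j) * B (Suc j))" using inv eta by (simp add: algebra_simps)
  also have "\<dots> = w - of_int (c + trace_w + int t * n)" using BA n by (simp add: algebra_simps)
  finally have inv2: "1 / \<rho> = w - of_int (c + trace_w + int t * n)" .
  have "frac (1 / \<rho>) = 1 / \<rho>" using rho1 by (simp add: frac_eq)
  then have "1 / \<rho> = frac w" using inv2 frac_w_minus by metis
  then have "\<rho> = xi 1" using xi_1 rho1 by (metis divide_divide_eq_right div_by_1 divide_self_if mult_1 one_divide_eq_0_iff)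
  then have rr: "xi (Suc j) = xi 1 + real t" by (simp add: \<rho>_def)
  have "qconj D (xi (Suc j)) = qconj D (xi 1) + real t"
    using rr qconj_add[OF inK_xi inK_of_nat] by simp
  moreover have "qconj D (xi 1) > -1" "qconj D (xi (Suc j)) < 0" using qconj_xi_reduced[of 1] qconj_xi_reduced[of "Suc j"] by auto
  ultimately show False using t by simp
qed

lemma totpos_unit_A_E: "totpos_unit (A E)"
  unfolding totpos_unit_def totpos_def using A_OK A_pos qconj_A B_E_pos B_OK A_E_mult_B_E by auto

lemma indecomposable_semiconv_or_qconj: "indecomposable x \<Longrightarrow> is_semiconv x \<or> is_semiconv (qconj D x)"
proof -
  assume ix: "indecomposable x"
  have tx: "totpos x" using ix by (simp add: indecomposable_def)
  obtain b c where bc: "cone_pair b c" "is_semiconv b \<or> is_semiconv (qconj D b)" "is_semiconv c \<or> is_semiconv (qconj D c)" "conj_ratio b \<ge> conj_ratio x" "conj_ratio x \<ge> conj_ratio c"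
    using cone_pair_around[OF tx] by blast
  have "x = b \<or> x = c" by (rule cone_pair_indecomposable[OF bc(1) ix bc(4,5)])
  then show ?thesis using bc by auto
qed

lemma is_semiconv_bounds: "is_semiconv y \<Longrightarrow> qconj D y \<le> 1 \<and> y \<ge> 1"
  unfolding is_semiconv_def using qconj_semiconv_le1 semiconv_ge1 by auto

lemma is_semiconv_if_ge_qconj: "indecomposable x \<Longrightarrow> x \<ge> qconj D x \<Longrightarrow> is_semiconv x"
proof -
  assume ix: "indecomposable x" and ge: "x \<ge> qconj D x"
  have tx: "totpos x" using ix by (simp add: indecomposable_def)
  have xx: "qconj D (qconj D x) = x" using tx by (simp add: totpos_def OK_inK)
  show ?thesis
  proof (rule ccontr)
    assume "\<not> is_semiconv x"
    then have sc': "is_semiconv (qconj D x)" using indecomposable_semiconv_or_qconj[OF ix] by simp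
    then have "x \<le> 1" "qconj D x \<ge> 1" using is_semiconv_bounds[OF sc'] xx by auto
    then have "x = 1" "qconj D x = 1" using ge by auto
    then have "is_semiconv x" using is_semiconv_semiconv[of 0 0] uu_pos by (simp add: semiconv_0 A_simps)
    then show False using \<open>\<not> is_semiconv x\<close> by simp
  qed
qed

text \<open>A unit \<open>x > 1\<close> is indecomposable with \<open>x \<ge> x'\<close>, hence a semiconvergent \<open>\<alpha>\<^sub>2\<^sub>k\<^sub>-\<^sub>1\<^sub>,\<^sub>t\<close>;
  being a unit forces \<open>t = 0\<close> and makes \<open>2k\<close> a period of the continued fraction.\<close>
lemma A_E_le_totpos_unit: "totpos_unit x \<Longrightarrow> x > 1 \<Longrightarrow> A E \<le> x"
proof -
  assume tu: "totpos_unit x" and x1: "x > 1"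
  have nx: "x * qconj D x = 1" by (rule totpos_unit_norm[OF tu])
  then have "qconj D x = 1 / x" using x1 by (simp add: field_simps)
  moreover have "1 \<le> x * x" using x1 mult_mono[of 1 x 1 x] by simp
  ultimately have "x \<ge> qconj D x" using x1 by (simp add: divide_le_eq)
  then have "is_semiconv x" using is_semiconv_if_ge_qconj indecomposable_totpos_unit[OF tu] by simp
  then obtain k t where kt: "int t < uu (2*k+1)" "x = semiconv k t" unfolding is_semiconv_def by blast
  have t0: "t = 0"
  proof (rule ccontr)
    assume "t \<noteq> 0"
    then show False using semiconv_not_unit[of t k] kt nx by simp
  qed
  then have xA: "x = A (2*k)" using kt by (simp add: semiconv_0)
  have "2*k \<ge> 1" using x1 xA by (cases k) (auto simp: A_simps)
  have "A (2*k) * B (2*k) = 1" using nx xA qconj_A by simp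
  then have dp: "is_period (2*k)" using is_period_if_A_unit \<open>2*k \<ge> 1\<close> by simp
  have "E \<le> 2*k"
  proof (cases "even s")
    case True then show ?thesis using period_least[OF dp] by (simp add: E_def)
  next
    case False
    have "s dvd 2*k" by (rule period_dvd[OF dp])
    moreover have "coprime s 2" using False by simp
    ultimately have "s dvd k" by (metis coprime_dvd_mult_right_iff)
    then have "s \<le> k" using \<open>2*k \<ge> 1\<close> by (simp add: dvd_imp_le)
    then show ?thesis using False by (simp add: E_def)
  qed
  then show ?thesis using xA A_mono by simp
qed

lemma tp_units_gt1_iff: "x \<in> tp_units_gt1 D \<longleftrightarrow> totpos_unit x \<and> x > 1"
  unfolding tp_units_gt1_def totpos_unit_def totpos_def totally_positive_def by auto

lemma epsD_eq: "epsD D = A E"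
  unfolding epsD_def
proof (rule the_equality)
  show "A E \<in> tp_units_gt1 D \<and> (\<forall>v\<in>tp_units_gt1 D. A E \<le> v)"
    using totpos_unit_A_E A_E_gt1 A_E_le_totpos_unit tp_units_gt1_iff by auto
  fix u assume "u \<in> tp_units_gt1 D \<and> (\<forall>v\<in>tp_units_gt1 D. u \<le> v)"
  moreover have "A E \<in> tp_units_gt1 D" using totpos_unit_A_E A_E_gt1 tp_units_gt1_iff by auto
  ultimately have "u \<le> A E" "A E \<le> u" using A_E_le_totpos_unit tp_units_gt1_iff by auto
  then show "u = A E" by simp
qed

subsection \<open>The set \<open>S\<^sub>0\<close> and its size\<close>

lemma semiconv_strict_mono: "t < t' \<Longrightarrow> semiconv k t < semiconv k t'"
  unfolding semiconv_def using A_pos[of "2*k+1"] by simp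

lemma semiconv_less_next: "int t < uu (2*k+1) \<Longrightarrow> semiconv k t < A (2*k+2)"
proof -
  assume "int t < uu (2*k+1)"
  then have "t < nat (uu (2*k+1))" by linarith
  then have "semiconv k t < semiconv k (nat (uu (2*k+1)))" by (rule semiconv_strict_mono)
  then show ?thesis using semiconv_top by simp
qed

lemma A_le_semiconv: "A (2*k) \<le> semiconv k t"
  unfolding semiconv_def using A_pos[of "2*k+1"] by simp

definition semiconv_idx :: "(nat \<times> nat) set" where
  "semiconv_idx = (SIGMA k:{..<E div 2}. {..<nat (uu (2*k+1))})"

lemma semiconv_idx_iff: "(k, t) \<in> semiconv_idx \<longleftrightarrow> 2*k < E \<and> int t < uu (2*k+1)"
  using E_even by (auto simp: semiconv_idx_def)

lemma S0_subset_semiconvs: "S0 D \<subseteq> (\<lambda>(k,t). semiconv k t) ` semiconv_idx"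
proof
  fix \<sigma> assume sig: "\<sigma> \<in> S0 D"
  then have h: "epsD D > \<sigma>" "\<sigma> \<ge> qconj D \<sigma>" "qconj D \<sigma> > 0" by (auto simp: S0_def)
  from sig obtain k t where kt: "int t < uu (2*k+1)" "\<sigma> = semiconv k t \<or> \<sigma> = qconj D (semiconv k t)"
    by (auto simp: S0_def Sset_def alpha_ir_eq_semiconv)
  show "\<sigma> \<in> (\<lambda>(k,t). semiconv k t) ` semiconv_idx"
  proof (cases "\<sigma> = semiconv k t")
    case True
    have "2*k < E"
    proof (rule ccontr)
      assume "\<not> 2*k < E"
      then have "A E \<le> A (2*k)" using A_mono by simp
      also have "\<dots> \<le> semiconv k t" by (rule A_le_semiconv)
      finally show False using h(1) True epsD_eq by simp
    qed
    then have "(k, t) \<in> semiconv_idx" using kt semiconv_idx_iff by simp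
    then show ?thesis using True by force
  next
    case False
    then have s': "\<sigma> = qconj D (semiconv k t)" using kt by simp
    have q1: "qconj D \<sigma> = semiconv k t" using s' qconj_qconj[OF OK_inK[OF semiconv_OK[of k t]]] by simp
    have "semiconv k t \<ge> 1" by (rule semiconv_ge1)
    moreover have "\<sigma> \<le> 1" using s' qconj_semiconv_le1 by simp
    ultimately have "\<sigma> = 1" using h(2) q1 by simp
    moreover have "(0, 0) \<in> semiconv_idx" using semiconv_idx_iff E_pos uu_pos[of 1] by simp
    moreover have "semiconv 0 0 = 1" by (simp add: semiconv_0 A_simps)
    ultimately show ?thesis by force
  qed
qed

lemma semiconvs_subset_S0: "(\<lambda>(k,t). semiconv k t) ` semiconv_idx \<subseteq> S0 D"
proof
  fix \<sigma> assume "\<sigma> \<in> (\<lambda>(k,t). semiconv k t) ` semiconv_idx"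
  then obtain k t where kt: "(k,t) \<in> semiconv_idx" "\<sigma> = semiconv k t" by auto
  have h: "2*k < E" "int t < uu (2*k+1)" using kt semiconv_idx_iff by auto
  have "\<sigma> \<in> Sset D" unfolding Sset_def using h kt by (auto simp: alpha_ir_eq_semiconv)
  moreover have "\<sigma> < epsD D"
  proof -
    have "2*k+2 \<le> E" using h E_even by presburger
    then have "A (2*k+2) \<le> A E" using A_mono by simp
    then show ?thesis using semiconv_less_next[OF h(2)] kt epsD_eq by simp
  qed
  moreover have "\<sigma> \<ge> qconj D \<sigma>" using kt semiconv_ge1[of k t] qconj_semiconv_le1[of k t] by simp
  moreover have "qconj D \<sigma> > 0" using kt qconj_semiconv_pos[of t k] h by simp
  ultimately show "\<sigma> \<in> S0 D" by (simp add: S0_def)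
qed

lemma S0_eq_semiconvs: "S0 D = (\<lambda>(k,t). semiconv k t) ` semiconv_idx"
  using S0_subset_semiconvs semiconvs_subset_S0 by (rule equalityI)

lemma inj_on_semiconv: "inj_on (\<lambda>(k,t). semiconv k t) semiconv_idx"
proof (rule inj_onI, clarify)
  fix k t k' t' assume a: "(k,t) \<in> semiconv_idx" "(k',t') \<in> semiconv_idx" "semiconv k t = semiconv k' t'"
  have lt: "semiconv k t < semiconv k' t'" if "(k,t) \<in> semiconv_idx" "k < k'" for k t k' t'
  proof -
    have "semiconv k t < A (2*k+2)" using semiconv_less_next that semiconv_idx_iff by simp
    also have "A (2*k+2) \<le> A (2*k')" using A_mono that by simp
    also have "\<dots> \<le> semiconv k' t'" by (rule A_le_semiconv)
    finally show ?thesis .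
  qed
  have "k = k'" using lt[OF a(1)] lt[OF a(2)] a(3) by (metis less_irrefl nat_neq_iff)
  moreover have "t = t'" using a(3) \<open>k = k'\<close> semiconv_strict_mono by (metis less_irrefl nat_neq_iff)
  ultimately show "k = k' \<and> t = t'" by simp
qed

lemma finite_semiconv_idx: "finite semiconv_idx" by (simp add: semiconv_idx_def)

lemma finite_S0: "finite (S0 D)" using S0_eq_semiconvs finite_semiconv_idx by simp

lemma card_S0_eq_sum: "int (card (S0 D)) = (\<Sum>k<E div 2. uu (2*k+1))"
proof -
  have "card (S0 D) = card semiconv_idx" using S0_eq_semiconvs card_image[OF inj_on_semiconv] by simp
  also have "\<dots> = (\<Sum>k<E div 2. nat (uu (2*k+1)))" by (simp add: semiconv_idx_def)
  finally have "int (card (S0 D)) = (\<Sum>k<E div 2. int (nat (uu (2*k+1))))" by simp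
  also have "\<dots> = (\<Sum>k<E div 2. uu (2*k+1))"
  proof (intro sum.cong refl)
    fix k show "int (nat (uu (2*k+1))) = uu (2*k+1)" using uu_pos[of "2*k+1"] by simp
  qed
  finally show ?thesis .
qed

lemma uu_period: "uu s = 2 * uu 0 - trace_w"
proof -
  have s1: "s \<ge> 1" using period_pos by simp
  have "xi (Suc s) = xi 1" using xi_add_period[of 1] by simp
  then have "xi s = of_int (uu s) + frac w" using xi_eq_uu_plus[of s] xi_1 by simp
  then have rs: "xi s = of_int (uu s - uu 0) + w" by (simp add: frac_def uu_def')
  have "qconj D (xi s) = of_int (uu s - uu 0) + w'" unfolding rs using qconj_OK_coords[of "uu s - uu 0" 1] by simp
  then have q: "qconj D (xi s) = of_int (uu s - uu 0 + trace_w) - w" by (simp add: w'_eq)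
  have "qconj D (xi s) > -1" "qconj D (xi s) < 0" using qconj_xi_reduced[OF s1] by auto
  then have "of_int (uu s - uu 0 + trace_w) < w" "w < of_int (uu s - uu 0 + trace_w) + 1" using q by auto
  then have "\<lfloor>w\<rfloor> = uu s - uu 0 + trace_w" by (intro floor_unique) auto
  then show ?thesis using uu_def'[of 0] by simp
qed

lemma uu_Suc_mod_period: "uu (1 + n) = uu (1 + n mod s)"
proof (induction n rule: less_induct)
  case (less n)
  show ?case
  proof (cases "n < s")
    case True then show ?thesis by simp
  next
    case False
    have per: "uu (i + s) = uu i" if "i \<ge> 1" for i using is_period_period that by (simp add: is_period_def)
    have "uu (1 + n) = uu ((1 + (n - s)) + s)" using False by simp
    also have "\<dots> = uu (1 + (n - s))" by (rule per) simp
    also have "\<dots> = uu (1 + (n - s) mod s)" using less period_pos False by simp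
    also have "(n - s) mod s = n mod s" using False by (simp add: mod_if)
    finally show ?thesis .
  qed
qed

lemma bij_betw_double_mod: "odd s \<Longrightarrow> bij_betw (\<lambda>k. (2*k) mod s) {..<s} {..<s}"
proof -
  assume os: "odd s"
  have inj: "inj_on (\<lambda>k. (2*k) mod s) {..<s}"
  proof (rule inj_onI)
    fix k k' assume kk: "k \<in> {..<s}" "k' \<in> {..<s}" "(2*k) mod s = (2*k') mod s"
    have cop: "coprime s 2" using os by simp
    have aux: "k = k'" if "k' < k" "k < s" "(2*k) mod s = (2*k') mod s" for k k'
    proof -
      have "s dvd (2*k - 2*k')" using that mod_eq_dvd_iff_nat[of "2*k'" "2*k" s] by simp
      then have "s dvd 2 * (k - k')" by (simp add: right_diff_distrib')
      then have "s dvd (k - k')" using cop by (metis coprime_dvd_mult_right_iff)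
      moreover have "0 < k - k'" "k - k' < s" using that by auto
      ultimately show ?thesis using dvd_imp_le by fastforce
    qed
    show "k = k'"
    proof (cases k k' rule: linorder_cases)
      case less then show ?thesis using aux[of k k'] kk by simp
    next
      case greater then show ?thesis using aux[of k' k] kk by simp
    qed simp
  qed
  have "(\<lambda>k. (2*k) mod s) ` {..<s} \<subseteq> {..<s}" using period_pos by auto
  then have "(\<lambda>k. (2*k) mod s) ` {..<s} = {..<s}" using endo_inj_surj[OF _ _ inj] by simp
  then show ?thesis using inj by (simp add: bij_betw_def)
qed

lemma sum_uu_odd_period: "odd s \<Longrightarrow> (\<Sum>k<s. uu (2*k+1)) = 2 * uu 0 + (\<Sum>i\<in>{1..<s}. uu i) - trace_w"
proof -
  assume os: "odd s"
  have "(\<Sum>k<s. uu (2*k+1)) = (\<Sum>k<s. uu (1 + (2*k) mod s))"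
    using uu_Suc_mod_period by (intro sum.cong) (auto simp: add.commute)
  also have "\<dots> = (\<Sum>j<s. uu (1 + j))"
    using sum.reindex_bij_betw[OF bij_betw_double_mod[OF os], of "\<lambda>j. uu (1 + j)"] by simp
  also have "\<dots> = (\<Sum>i\<in>{1..<Suc s}. uu i)"
    using sum.shift_bounds_Suc_ivl[of uu 0 s] by (simp add: lessThan_atLeast0)
  also have "\<dots> = (\<Sum>i\<in>{1..<s}. uu i) + uu s" using period_pos by (simp add: sum.atLeastLessThan_Suc)
  finally show ?thesis using uu_period by simp
qed

lemma card_S0_eq_MD: "int (card (S0 D)) = MD D"
proof (cases "even s")
  case True
  then show ?thesis using card_S0_eq_sum by (simp add: MD_def E_def Let_def)
next
  case False
  have "int (card (S0 D)) = (\<Sum>k<s. uu (2*k+1))" using card_S0_eq_sum False by (simp add: E_def)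
  also have "\<dots> = 2 * uu 0 + (\<Sum>i\<in>{1..<s}. uu i) - trace_w" using sum_uu_odd_period[OF False] .
  finally show ?thesis using False by (simp add: MD_def Let_def trace_w_def)
qed

subsection \<open>Universality\<close>

lemma totpos_unit_mult: "totpos_unit x \<Longrightarrow> totpos_unit y \<Longrightarrow> totpos_unit (x * y)"
proof -
  assume tx: "totpos_unit x" and ty: "totpos_unit y"
  obtain vx where vx: "vx \<in> OK D" "x * vx = 1" using tx by (auto simp: totpos_unit_def)
  obtain vy where vy: "vy \<in> OK D" "y * vy = 1" using ty by (auto simp: totpos_unit_def)
  have xO: "x \<in> OK D" "x > 0" "qconj D x > 0" using tx by (auto simp: totpos_unit_def totpos_def)
  have yO: "y \<in> OK D" "y > 0" "qconj D y > 0" using ty by (auto simp: totpos_unit_def totpos_def)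
  have "qconj D (x * y) = qconj D x * qconj D y" by (rule qconj_mult[OF OK_inK[OF xO(1)] OK_inK[OF yO(1)]])
  then have "totpos (x * y)" using xO yO unfolding totpos_def by (simp add: OK_mult)
  moreover have "(x * y) * (vx * vy) = 1" using vx vy by (simp add: algebra_simps)
  ultimately show ?thesis unfolding totpos_unit_def using OK_mult[OF vx(1) vy(1)] by blast
qed

lemma totpos_unit_1: "totpos_unit 1" unfolding totpos_unit_def totpos_def by auto

lemma totpos_unit_power: "totpos_unit x \<Longrightarrow> totpos_unit (x ^ k)"
  by (induction k) (auto intro: totpos_unit_mult totpos_unit_1)

lemma inverse_A_E: "inverse (A E) = B E"
  using A_E_mult_B_E by (rule inverse_unique)

lemma inverse_B_E: "inverse (B E) = A E"
  using A_E_mult_B_E by (metis inverse_inverse_eq inverse_A_E)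

lemma totpos_unit_B_E: "totpos_unit (B E)" using totpos_unit_qconj[OF totpos_unit_A_E] qconj_A by simp

lemma totpos_unit_A_E_powi: "totpos_unit (A E powi n)"
  unfolding power_int_def using totpos_unit_power[OF totpos_unit_A_E] totpos_unit_power[OF totpos_unit_B_E] inverse_A_E by simp

lemma A_E_powi_OK: "A E powi n \<in> OK D" using totpos_unit_A_E_powi by (simp add: totpos_unit_def totpos_def)

lemma qconj_A_E_powi: "qconj D (A E powi n) = B E powi n"
proof (cases "n \<ge> 0")
  case True
  then show ?thesis using qconj_power[OF OK_inK[OF A_OK]] qconj_A by (simp add: power_int_def)
next
  case False
  have "qconj D (B E ^ nat (-n)) = A E ^ nat (-n)" using qconj_power[OF OK_inK[OF B_OK]] qconj_B by simp
  then show ?thesis using False by (simp add: power_int_def inverse_A_E inverse_B_E)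
qed

lemma conj_ratio_mult: "x \<in> OK D \<Longrightarrow> y \<in> OK D \<Longrightarrow> conj_ratio (x * y) = conj_ratio x * conj_ratio y"
  unfolding conj_ratio_def by (simp add: qconj_mult OK_inK)

definition rho :: real where "rho = conj_ratio (A E)"

lemma rho_bounds: "0 < rho \<and> rho < 1"
proof -
  have "rho = B E / A E" by (simp add: rho_def conj_ratio_def qconj_A)
  moreover have "B E = 1 / A E" using A_E_mult_B_E A_E_gt1 by (simp add: field_simps)
  ultimately have "rho = 1 / (A E * A E)" by simp
  moreover have "A E * A E > 1" using A_E_gt1 by (metis less_1_mult)
  ultimately show ?thesis by simp
qed

lemma conj_ratio_A_E_powi: "conj_ratio (A E powi n) = rho powi n"
  unfolding conj_ratio_def rho_def qconj_A_E_powi by (simp add: qconj_A power_int_divide_distrib)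

lemma indecomposable_S0: "\<sigma> \<in> S0 D \<Longrightarrow> indecomposable \<sigma>"
proof -
  assume "\<sigma> \<in> S0 D"
  then obtain k t where kt: "(k, t) \<in> semiconv_idx" "\<sigma> = semiconv k t" using S0_eq_semiconvs by auto
  then have "int t < uu (2*k+1)" using semiconv_idx_iff by simp
  then have "is_semiconv \<sigma>" using kt unfolding is_semiconv_def by blast
  then show ?thesis by (rule indecomposable_if_is_semiconv)
qed

lemma S0_OK: "\<sigma> \<in> S0 D \<Longrightarrow> \<sigma> \<in> OK D"
  using indecomposable_S0 by (simp add: indecomposable_def totpos_def)

lemma indecomposable_eq_S0_times_unit:
  assumes ind: "indecomposable \<theta>"
  shows "\<exists>\<sigma> n. \<sigma> \<in> S0 D \<and> \<theta> = \<sigma> * A E powi n"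
proof -
  have "\<theta> > 0" using ind by (simp add: indecomposable_def totpos_def)
  then obtain n where n: "A E powi n \<le> \<theta>" "\<theta> < A E powi (n + 1)"
    using ex_power_int_bracket[OF A_E_gt1] by blast
  define \<eta> where "\<eta> = \<theta> / A E powi n"
  have pos: "A E powi n > 0" using A_E_gt1 by simp
  have "A E powi (n + 1) = A E powi n * A E" using A_E_gt1 by (simp add: power_int_add)
  then have \<eta>_bounds: "1 \<le> \<eta>" "\<eta> < A E"
    using n pos by (simp_all add: \<eta>_def le_divide_eq divide_less_eq mult.commute)
  have "\<eta> = A E powi (- n) * \<theta>"
    by (simp add: \<eta>_def power_int_minus divide_inverse mult.commute)
  then have ind_\<eta>: "indecomposable \<eta>"
    using indecomposable_mult_totpos_unit[OF ind totpos_unit_A_E_powi] by simp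
  have "is_semiconv \<eta>"
  proof (rule ccontr)
    assume not_sc: "\<not> is_semiconv \<eta>"
    then have "is_semiconv (qconj D \<eta>)" using indecomposable_semiconv_or_qconj[OF ind_\<eta>] by simp
    then have "qconj D (qconj D \<eta>) \<le> 1" using is_semiconv_bounds by blast
    moreover have "qconj D (qconj D \<eta>) = \<eta>"
      using ind_\<eta> by (simp add: indecomposable_def totpos_def OK_inK)
    ultimately have "\<eta> = 1" using \<eta>_bounds by simp
    then show False using not_sc is_semiconv_semiconv[of 0 0] by (simp add: semiconv_0 A_simps)
  qed
  then obtain k t where kt: "int t < uu (2*k+1)" "\<eta> = semiconv k t"
    unfolding is_semiconv_def by blast
  have "2*k < E"
  proof (rule ccontr)
    assume "\<not> 2*k < E"
    then have "A E \<le> A (2*k)" using A_mono by simp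
    also have "\<dots> \<le> \<eta>" using kt A_le_semiconv by simp
    finally show False using \<eta>_bounds by simp
  qed
  then have "\<eta> \<in> S0 D" using S0_eq_semiconvs kt semiconv_idx_iff by force
  moreover have "\<theta> = \<eta> * A E powi n" using A_E_gt1 by (simp add: \<eta>_def)
  ultimately show ?thesis by blast
qed

lemma conj_ratio_S0_times_unit: "\<sigma> \<in> S0 D \<Longrightarrow> conj_ratio (\<sigma> * A E powi n) = conj_ratio \<sigma> * rho powi n"
  using conj_ratio_mult[OF S0_OK A_E_powi_OK] conj_ratio_A_E_powi by simp

lemma Qform_slot_vector_multiple:
  assumes "\<sigma> \<in> S0 D"
  obtains v1 v2 v3 v4 where "{v1, v2, v3, v4} \<subseteq> OK D"
    "Qform D (slot_vector \<sigma> (odd n) v1 v2 v3 v4) = real m * (\<sigma> * A E powi n)"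
proof -
  obtain a1 a2 a3 a4 where m: "int m = a1^2 + a2^2 + a3^2 + a4^2"
    using sum4sq_nat[of m] unfolding sum4sq_def by blast
  define e where "e = A E powi (n div 2)"
  have unit: "A E powi n = (if odd n then epsD D else 1) * e^2"
    using power_int_parity_square[of "A E" n] A_E_gt1 by (simp add: e_def epsD_eq)
  have "real m = of_int a1^2 + of_int a2^2 + of_int a3^2 + of_int a4^2"
    using arg_cong[OF m, of real_of_int] by simp
  then have sq: "(of_int a1 * e)^2 + (of_int a2 * e)^2 + (of_int a3 * e)^2 + (of_int a4 * e)^2 = real m * e^2"
    by (simp add: power_mult_distrib distrib_right)
  have "Qform D (slot_vector \<sigma> (odd n) (of_int a1 * e) (of_int a2 * e) (of_int a3 * e) (of_int a4 * e))
      = \<sigma> * (if odd n then epsD D else 1) * (real m * e^2)"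
    by (simp only: Qform_slot_vector[OF finite_S0 assms] sq)
  also have "\<dots> = real m * (\<sigma> * A E powi n)" unfolding unit by (simp add: ac_simps)
  finally have "Qform D (slot_vector \<sigma> (odd n) (of_int a1 * e) (of_int a2 * e) (of_int a3 * e) (of_int a4 * e))
      = real m * (\<sigma> * A E powi n)" .
  moreover have "of_int a * e \<in> OK D" for a unfolding e_def by (rule OK_mult[OF OK_of_int A_E_powi_OK])
  ultimately show ?thesis
    using that[of "of_int a1 * e" "of_int a2 * e" "of_int a3 * e" "of_int a4 * e"] by simp
qed

text \<open>Two members of a cone pair never share a slot: were \<open>b = \<sigma> \<epsilon>\<^sup>n\<^sup>1\<close> and \<open>c = \<sigma> \<epsilon>\<^sup>n\<^sup>2\<close> with
  \<open>n\<^sub>1 \<equiv> n\<^sub>2 (mod 2)\<close>, then \<open>n\<^sub>1 + 1 < n\<^sub>2\<close> and the indecomposable \<open>\<sigma> \<epsilon>\<^sup>n\<^sup>1\<^sup>+\<^sup>1\<close> would lie strictly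
  inside the cone.\<close>
lemma cone_pair_slots_distinct:
  assumes bc: "cone_pair b c"
    and b: "\<sigma>1 \<in> S0 D" "b = \<sigma>1 * A E powi n1"
    and c: "\<sigma>2 \<in> S0 D" "c = \<sigma>2 * A E powi n2"
  shows "\<sigma>1 \<noteq> \<sigma>2 \<or> odd n1 \<noteq> odd n2"
proof (rule ccontr)
  assume "\<not> (\<sigma>1 \<noteq> \<sigma>2 \<or> odd n1 \<noteq> odd n2)"
  then have eq: "\<sigma>2 = \<sigma>1" "odd n1 = odd n2" by auto
  have ratio_b: "conj_ratio b = conj_ratio \<sigma>1 * rho powi n1"
    using conj_ratio_S0_times_unit[OF b(1)] b(2) by simp
  have ratio_c: "conj_ratio c = conj_ratio \<sigma>1 * rho powi n2"
    using conj_ratio_S0_times_unit[OF c(1)] c(2) eq by simp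
  have pos: "conj_ratio \<sigma>1 > 0"
    using indecomposable_S0[OF b(1)] by (simp add: indecomposable_def totpos_def conj_ratio_def)
  have rho: "0 < rho" "rho < 1" using rho_bounds by auto
  have "n1 < n2"
  proof (rule ccontr)
    assume "\<not> n1 < n2"
    then have "rho powi n1 \<le> rho powi n2"
      using power_int_strict_decreasing[OF _ rho] by (cases "n1 = n2") (auto simp: less_le)
    then have "conj_ratio b \<le> conj_ratio c" using ratio_b ratio_c pos by simp
    then show False using bc by (simp add: cone_pair_def)
  qed
  then have "n1 + 1 < n2" using eq by presburger
  define \<theta> where "\<theta> = \<sigma>1 * A E powi (n1 + 1)"
  have ind: "indecomposable \<theta>"
    using indecomposable_mult_totpos_unit[OF indecomposable_S0[OF b(1)] totpos_unit_A_E_powi]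
    by (simp add: \<theta>_def mult.commute)
  have ratio_\<theta>: "conj_ratio \<theta> = conj_ratio \<sigma>1 * rho powi (n1 + 1)"
    using conj_ratio_S0_times_unit[OF b(1)] by (simp add: \<theta>_def)
  have "rho powi n2 < rho powi (n1 + 1)" "rho powi (n1 + 1) < rho powi n1"
    using power_int_strict_decreasing[OF _ rho] \<open>n1 + 1 < n2\<close> by simp_all
  then have less: "conj_ratio c < conj_ratio \<theta>" "conj_ratio \<theta> < conj_ratio b"
    unfolding ratio_b ratio_c ratio_\<theta> using pos by simp_all
  then have "\<theta> = b \<or> \<theta> = c" using cone_pair_indecomposable[OF bc ind] by simp
  then show False using less by auto
qed

lemma Qform_universal:
  assumes "\<alpha> \<in> OK D" and "totally_positive D \<alpha>"
  shows "\<exists>x. (\<forall>\<sigma>\<in>S0 D. \<forall>j\<in>{1..8}. x \<sigma> j \<in> OK D) \<and> \<alpha> = Qform D x"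
proof -
  have \<alpha>: "totpos \<alpha>" using assms by (simp add: totpos_def totally_positive_def)
  obtain b c where bc: "cone_pair b c" "conj_ratio b \<ge> conj_ratio \<alpha>" "conj_ratio \<alpha> \<ge> conj_ratio c"
    using cone_pair_around[OF \<alpha>] by blast
  obtain m n :: nat where \<alpha>_eq: "\<alpha> = real m * b + real n * c"
    using cone_pair_nat_combination[OF bc(1) \<alpha> bc(2,3)] by blast
  have "indecomposable b" "indecomposable c" using bc(1) by (auto simp: cone_pair_def)
  obtain \<sigma>1 n1 where b: "\<sigma>1 \<in> S0 D" "b = \<sigma>1 * A E powi n1"
    using indecomposable_eq_S0_times_unit[OF \<open>indecomposable b\<close>] by blast
  obtain \<sigma>2 n2 where c: "\<sigma>2 \<in> S0 D" "c = \<sigma>2 * A E powi n2"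
    using indecomposable_eq_S0_times_unit[OF \<open>indecomposable c\<close>] by blast
  obtain v1 v2 v3 v4 where v: "{v1, v2, v3, v4} \<subseteq> OK D"
    "Qform D (slot_vector \<sigma>1 (odd n1) v1 v2 v3 v4) = real m * (\<sigma>1 * A E powi n1)"
    by (rule Qform_slot_vector_multiple[OF b(1)])
  obtain w1 w2 w3 w4 where w: "{w1, w2, w3, w4} \<subseteq> OK D"
    "Qform D (slot_vector \<sigma>2 (odd n2) w1 w2 w3 w4) = real n * (\<sigma>2 * A E powi n2)"
    by (rule Qform_slot_vector_multiple[OF c(1)])
  define x where
    "x = (\<lambda>s j. slot_vector \<sigma>1 (odd n1) v1 v2 v3 v4 s j + slot_vector \<sigma>2 (odd n2) w1 w2 w3 w4 s j)"
  have "Qform D x = Qform D (slot_vector \<sigma>1 (odd n1) v1 v2 v3 v4) + Qform D (slot_vector \<sigma>2 (odd n2) w1 w2 w3 w4)"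
    unfolding x_def
    by (rule Qform_add_disjoint[OF slot_vector_disjoint[OF cone_pair_slots_distinct[OF bc(1) b c]]])
  also have "\<dots> = \<alpha>" by (simp only: v(2) w(2) \<alpha>_eq b(2) c(2))
  finally have "Qform D x = \<alpha>" .
  moreover have "x \<sigma> j \<in> OK D" for \<sigma> j
    unfolding x_def using v(1) w(1) by (intro OK_add slot_vector_mem) (simp_all add: OK_0)
  ultimately show ?thesis by (intro exI[of _ x]) simp
qed

end

theorem theorem10:
  fixes D :: nat
  assumes "D > 1" and "squarefree D"
  shows "finite (S0 D) \<and> int (8 * card (S0 D)) = 8 * MD D \<and>
         (\<forall>\<alpha> \<in> OK D. totally_positive D \<alpha> \<longrightarrow>
            (\<exists>x :: real \<Rightarrow> nat \<Rightarrow> real.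
               (\<forall>\<sigma>\<in>S0 D. \<forall>j\<in>{1..8}. x \<sigma> j \<in> OK D) \<and> \<alpha> = Qform D x))"
proof -
  interpret real_quadratic_field D using assms by unfold_locales
  show ?thesis using finite_S0 card_S0_eq_MD Qform_universal by simp
qed

end
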